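(* Let $(\mathcal{A},\mathbb{W},\mathfrak{s})$ be a weakly extriangulated category in which every inflation is a monomorphism and every deflation is an epimorphism. Let $\mathcal{W}$ be the class of conflations, i.e. of all sequences $A\xrightarrow{f}B\xrightarrow{g}C$ representing $\mathfrak{s}(\delta)$ for some $\delta\in\mathbb{W}(C,A)$. Then $\mathcal{W}$ is a weakly exact structure on $\mathcal{A}$.
   Context: Let $\mathcal{A}$ be an additive category. A weakly exact structure on $\mathcal{A}$ is a class $\mathcal{W}$ of kernel-cokernel pairs $A\xrightarrow{i}B\xrightarrow{d}C$ ($i$ a kernel of $d$, $d$ a cokernel of $i$), closed under isomorphisms and finite direct sums of sequences, with $1_A$ an admissible monic and an admissible epic for all $A$, such that pushouts of admissible monics (first maps of sequences in $\mathcal{W}$) along arbitrary morphisms exist and are admissible monics and pullbacks of admissible epics (second maps) along arbitrary morphisms exist and are admissible epics. For an additive bifunctor $\mathbb{E}:\mathcal{A}^{op}\times\mathcal{A}\to\mathrm{Ab}$ and $\delta\in\mathbb{E}(C,A)$, write $a_*\delta=\mathbb{E}(C,a)(\delta)$, $c^*\delta=\mathbb{E}(c,A)(\delta)$; a morphism of extensions is a pair $(a,c)$ with $a_*\delta=c^*\rho$. $g:B\to C$ is a weak cokernel of $f:A\to B$ if $\mathrm{Hom}(C,X)\to\mathrm{Hom}(B,X)\to\mathrm{Hom}(A,X)$ is exact for all $X$; weak kernels dually; a weak kernel-cokernel pair is $A\xrightarrow{f}B\xrightarrow{g}C$ with $f$ a weak kernel of $g$ and $g$ a weak cokernel of $f$.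 Two such pairs with the same end terms are equivalent if there is an isomorphism $b$ of middle terms with $(1_A,b,1_C)$ a chain map. A realization $\mathfrak{s}$ assigns to each $\delta\in\mathbb{E}(C,A)$ an equivalence class $[A\xrightarrow{f}B\xrightarrow{g}C]$ such that (R0) every morphism of extensions lifts to a chain map $(a,b,c)$ between representatives. It is exact if (R1) for each representative the sequences $\mathrm{Hom}(C,-)\to\mathrm{Hom}(B,-)\to\mathrm{Hom}(A,-)\xrightarrow{a\mapsto a_*\delta}\mathbb{E}(C,-)$ and $\mathrm{Hom}(-,A)\to\mathrm{Hom}(-,B)\to\mathrm{Hom}(-,C)\xrightarrow{c\mapsto c^*\delta}\mathbb{E}(-,A)$ are exact, and (R2) the zero elements of $\mathbb{E}(0,A)$, $\mathbb{E}(A,0)$ are realized by $[A\xrightarrow{1}A\to0]$, $[0\to A\xrightarrow{1}A]$. The mapping cone of a chain map $(1_A,b,c)$ from $A\xrightarrow{f}B\xrightarrow{g}C$ to $A\xrightarrow{f'}B'\xrightarrow{g'}C'$ is $B\xrightarrow{\left[\begin{smallmatrix}-g\\ b\end{smallmatrix}\right]}C\oplus B'\xrightarrow{[c\ \ g']}C'$; mapping cocones of $(a,b,1_C)$ dually. A weakly extriangulated category is $(\mathcal{A},\mathbb{E},\mathfrak{s})$ with $\mathfrak{s}$ an exact realization satisfying (EA2): for $\rho\in\mathbb{E}(C',A)$, $c:C\to C'$, realizations $A\xrightarrow{f}B\xrightarrow{g}C$ of $c^*\rho$ and $A\xrightarrow{f'}B'\xrightarrow{g'}C'$ of $\rho$,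 there is $b$ with $(1_A,b,c)$ a chain map whose mapping cone realizes $f_*\rho$; and the dual (EA2)$^{op}$. Conflations are representatives of classes $\mathfrak{s}(\delta)$; inflations and deflations are their first and second morphisms. *)

theory Defs
  imports "HOL-Algebra.Group"
begin

section \<open>Additive categories (encoded with explicit hom-sets)\<close>

record ('o,'m) precat =
  Ob    :: "'o set"
  Hom   :: "'o \<Rightarrow> 'o \<Rightarrow> 'm set"
  cmp   :: "'m \<Rightarrow> 'm \<Rightarrow> 'm"          (* cmp g f = g \<circ> f *)
  idm   :: "'o \<Rightarrow> 'm"
  hadd  :: "'o \<Rightarrow> 'o \<Rightarrow> 'm \<Rightarrow> 'm \<Rightarrow> 'm"
  hzero :: "'o \<Rightarrow> 'o \<Rightarrow> 'm"

definition hom_grp :: "('o,'m) precat \<Rightarrow> 'o \<Rightarrow> 'o \<Rightarrow> 'm monoid" where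
  "hom_grp K X Y = \<lparr>carrier = Hom K X Y, mult = hadd K X Y, one = hzero K X Y\<rparr>"

definition hneg :: "('o,'m) precat \<Rightarrow> 'o \<Rightarrow> 'o \<Rightarrow> 'm \<Rightarrow> 'm" where
  "hneg K X Y f = m_inv (hom_grp K X Y) f"

definition is_category :: "('o,'m) precat \<Rightarrow> bool" where
  "is_category K \<longleftrightarrow>
     (\<forall>X\<in>Ob K. idm K X \<in> Hom K X X) \<and>
     (\<forall>X\<in>Ob K. \<forall>Y\<in>Ob K. \<forall>Z\<in>Ob K. \<forall>f\<in>Hom K X Y. \<forall>g\<in>Hom K Y Z.
        cmp K g f \<in> Hom K X Z) \<and>
     (\<forall>W\<in>Ob K. \<forall>X\<in>Ob K. \<forall>Y\<in>Ob K. \<forall>Z\<in>Ob K.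
        \<forall>f\<in>Hom K W X. \<forall>g\<in>Hom K X Y. \<forall>h\<in>Hom K Y Z.
        cmp K h (cmp K g f) = cmp K (cmp K h g) f) \<and>
     (\<forall>X\<in>Ob K. \<forall>Y\<in>Ob K. \<forall>f\<in>Hom K X Y.
        cmp K (idm K Y) f = f \<and> cmp K f (idm K X) = f)"

definition preadditive :: "('o,'m) precat \<Rightarrow> bool" where
  "preadditive K \<longleftrightarrow> is_category K \<and>
     (\<forall>X\<in>Ob K. \<forall>Y\<in>Ob K. comm_group (hom_grp K X Y)) \<and>
     (\<forall>X\<in>Ob K. \<forall>Y\<in>Ob K. \<forall>Z\<in>Ob K.
        (\<forall>f\<in>Hom K X Y. \<forall>f'\<in>Hom K X Y. \<forall>g\<in>Hom K Y Z.
           cmp K g (hadd K X Y f f') = hadd K X Z (cmp K g f) (cmp K g f')) \<and>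
        (\<forall>f\<in>Hom K X Y. \<forall>g\<in>Hom K Y Z. \<forall>g'\<in>Hom K Y Z.
           cmp K (hadd K Y Z g g') f = hadd K X Z (cmp K g f) (cmp K g' f)))"

definition zero_obj :: "('o,'m) precat \<Rightarrow> 'o \<Rightarrow> bool" where
  "zero_obj K Z \<longleftrightarrow> Z \<in> Ob K \<and>
     (\<forall>X\<in>Ob K. (\<exists>!f. f \<in> Hom K Z X) \<and> (\<exists>!f. f \<in> Hom K X Z))"

definition biproduct ::
  "('o,'m) precat \<Rightarrow> 'o \<Rightarrow> 'o \<Rightarrow> 'o \<Rightarrow> 'm \<Rightarrow> 'm \<Rightarrow> 'm \<Rightarrow> 'm \<Rightarrow> bool" where
  "biproduct K X Y S i1 i2 p1 p2 \<longleftrightarrow> S \<in> Ob K \<and>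
     i1 \<in> Hom K X S \<and> i2 \<in> Hom K Y S \<and> p1 \<in> Hom K S X \<and> p2 \<in> Hom K S Y \<and>
     cmp K p1 i1 = idm K X \<and> cmp K p2 i2 = idm K Y \<and>
     cmp K p1 i2 = hzero K Y X \<and> cmp K p2 i1 = hzero K X Y \<and>
     hadd K S S (cmp K i1 p1) (cmp K i2 p2) = idm K S"

definition additive_category :: "('o,'m) precat \<Rightarrow> bool" where
  "additive_category K \<longleftrightarrow> preadditive K \<and> (\<exists>Z. zero_obj K Z) \<and>
     (\<forall>X\<in>Ob K. \<forall>Y\<in>Ob K. \<exists>S i1 i2 p1 p2. biproduct K X Y S i1 i2 p1 p2)"

definition is_mono :: "('o,'m) precat \<Rightarrow> 'o \<Rightarrow> 'o \<Rightarrow> 'm \<Rightarrow> bool" where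
  "is_mono K X Y f \<longleftrightarrow> f \<in> Hom K X Y \<and>
     (\<forall>W\<in>Ob K. \<forall>g\<in>Hom K W X. \<forall>h\<in>Hom K W X. cmp K f g = cmp K f h \<longrightarrow> g = h)"

definition is_epi :: "('o,'m) precat \<Rightarrow> 'o \<Rightarrow> 'o \<Rightarrow> 'm \<Rightarrow> bool" where
  "is_epi K X Y f \<longleftrightarrow> f \<in> Hom K X Y \<and>
     (\<forall>W\<in>Ob K. \<forall>g\<in>Hom K Y W. \<forall>h\<in>Hom K Y W. cmp K g f = cmp K h f \<longrightarrow> g = h)"

definition is_iso :: "('o,'m) precat \<Rightarrow> 'o \<Rightarrow> 'o \<Rightarrow> 'm \<Rightarrow> bool" where
  "is_iso K X Y f \<longleftrightarrow> f \<in> Hom K X Y \<and>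
     (\<exists>g\<in>Hom K Y X. cmp K g f = idm K X \<and> cmp K f g = idm K Y)"

section \<open>Three-term sequences\<close>

text \<open>A sequence A --f--> B --g--> C is the tuple (A, f, B, g, C).\<close>
type_synonym ('o,'m) seq = "'o \<times> 'm \<times> 'o \<times> 'm \<times> 'o"

definition is_kernel :: "('o,'m) precat \<Rightarrow> 'o \<Rightarrow> 'o \<Rightarrow> 'o \<Rightarrow> 'm \<Rightarrow> 'm \<Rightarrow> bool" where
  "is_kernel K A B C i d \<longleftrightarrow> i \<in> Hom K A B \<and> d \<in> Hom K B C \<and>
     cmp K d i = hzero K A C \<and>
     (\<forall>W\<in>Ob K. \<forall>x\<in>Hom K W B. cmp K d x = hzero K W C \<longrightarrow>
        (\<exists>!y. y \<in> Hom K W A \<and> cmp K i y = x))"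

definition is_cokernel :: "('o,'m) precat \<Rightarrow> 'o \<Rightarrow> 'o \<Rightarrow> 'o \<Rightarrow> 'm \<Rightarrow> 'm \<Rightarrow> bool" where
  "is_cokernel K A B C i d \<longleftrightarrow> i \<in> Hom K A B \<and> d \<in> Hom K B C \<and>
     cmp K d i = hzero K A C \<and>
     (\<forall>W\<in>Ob K. \<forall>x\<in>Hom K B W. cmp K x i = hzero K A W \<longrightarrow>
        (\<exists>!y. y \<in> Hom K C W \<and> cmp K y d = x))"

definition kc_pair :: "('o,'m) precat \<Rightarrow> ('o,'m) seq \<Rightarrow> bool" where
  "kc_pair K S = (case S of (A, i, B, d, C) \<Rightarrow>
     A \<in> Ob K \<and> B \<in> Ob K \<and> C \<in> Ob K \<and> is_kernel K A B C i d \<and> is_cokernel K A B C i d)"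

definition chain_map :: "('o,'m) precat \<Rightarrow> ('o,'m) seq \<Rightarrow> ('o,'m) seq \<Rightarrow> 'm \<Rightarrow> 'm \<Rightarrow> 'm \<Rightarrow> bool" where
  "chain_map K S S' a b c = (case S of (A, f, B, g, C) \<Rightarrow> case S' of (A', f', B', g', C') \<Rightarrow>
     A \<in> Ob K \<and> B \<in> Ob K \<and> C \<in> Ob K \<and> A' \<in> Ob K \<and> B' \<in> Ob K \<and> C' \<in> Ob K \<and>
     f \<in> Hom K A B \<and> g \<in> Hom K B C \<and> f' \<in> Hom K A' B' \<and> g' \<in> Hom K B' C' \<and>
     a \<in> Hom K A A' \<and> b \<in> Hom K B B' \<and> c \<in> Hom K C C' \<and>
     cmp K b f = cmp K f' a \<and> cmp K c g = cmp K g' b)"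

definition seq_iso :: "('o,'m) precat \<Rightarrow> ('o,'m) seq \<Rightarrow> ('o,'m) seq \<Rightarrow> bool" where
  "seq_iso K S S' = (case S of (A, f, B, g, C) \<Rightarrow> case S' of (A', f', B', g', C') \<Rightarrow>
     (\<exists>a b c. chain_map K S S' a b c \<and>
        is_iso K A A' a \<and> is_iso K B B' b \<and> is_iso K C C' c))"

section \<open>Weakly exact structures\<close>

definition adm_monic :: "('o,'m) precat \<Rightarrow> ('o,'m) seq set \<Rightarrow> 'o \<Rightarrow> 'm \<Rightarrow> 'o \<Rightarrow> bool" where
  "adm_monic K W A i B \<longleftrightarrow> (\<exists>d C. (A, i, B, d, C) \<in> W)"

definition adm_epic :: "('o,'m) precat \<Rightarrow> ('o,'m) seq set \<Rightarrow> 'o \<Rightarrow> 'm \<Rightarrow> 'o \<Rightarrow> bool" where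
  "adm_epic K W B d C \<longleftrightarrow> (\<exists>A i. (A, i, B, d, C) \<in> W)"

definition is_pushout ::
  "('o,'m) precat \<Rightarrow> 'o \<Rightarrow> 'o \<Rightarrow> 'o \<Rightarrow> 'o \<Rightarrow> 'm \<Rightarrow> 'm \<Rightarrow> 'm \<Rightarrow> 'm \<Rightarrow> bool" where
  "is_pushout K A B A' P f a f' a' \<longleftrightarrow> P \<in> Ob K \<and>
     f' \<in> Hom K A' P \<and> a' \<in> Hom K B P \<and> cmp K a' f = cmp K f' a \<and>
     (\<forall>X\<in>Ob K. \<forall>u\<in>Hom K B X. \<forall>v\<in>Hom K A' X. cmp K u f = cmp K v a \<longrightarrow>
        (\<exists>!w. w \<in> Hom K P X \<and> cmp K w a' = u \<and> cmp K w f' = v))"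

definition is_pullback ::
  "('o,'m) precat \<Rightarrow> 'o \<Rightarrow> 'o \<Rightarrow> 'o \<Rightarrow> 'o \<Rightarrow> 'm \<Rightarrow> 'm \<Rightarrow> 'm \<Rightarrow> 'm \<Rightarrow> bool" where
  "is_pullback K B C C' P d c d' c' \<longleftrightarrow> P \<in> Ob K \<and>
     d' \<in> Hom K P C' \<and> c' \<in> Hom K P B \<and> cmp K d c' = cmp K c d' \<and>
     (\<forall>X\<in>Ob K. \<forall>u\<in>Hom K X B. \<forall>v\<in>Hom K X C'. cmp K d u = cmp K c v \<longrightarrow>
        (\<exists>!w. w \<in> Hom K X P \<and> cmp K c' w = u \<and> cmp K d' w = v))"

definition closed_dsum :: "('o,'m) precat \<Rightarrow> ('o,'m) seq set \<Rightarrow> bool" where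
  "closed_dsum K W \<longleftrightarrow>
     (\<forall>A f B g C A' f' B' g' C'. (A, f, B, g, C) \<in> W \<longrightarrow> (A', f', B', g', C') \<in> W \<longrightarrow>
       (\<forall>SA ia1 ia2 qa1 qa2 SB ib1 ib2 qb1 qb2 SC ic1 ic2 qc1 qc2.
          biproduct K A A' SA ia1 ia2 qa1 qa2 \<and> biproduct K B B' SB ib1 ib2 qb1 qb2 \<and>
          biproduct K C C' SC ic1 ic2 qc1 qc2 \<longrightarrow>
          (SA, hadd K SA SB (cmp K ib1 (cmp K f qa1)) (cmp K ib2 (cmp K f' qa2)),
           SB, hadd K SB SC (cmp K ic1 (cmp K g qb1)) (cmp K ic2 (cmp K g' qb2)),
           SC) \<in> W)) \<and>
     (\<forall>Z. zero_obj K Z \<longrightarrow> (Z, hzero K Z Z, Z, hzero K Z Z, Z) \<in> W)"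

definition weakly_exact :: "('o,'m) precat \<Rightarrow> ('o,'m) seq set \<Rightarrow> bool" where
  "weakly_exact K W \<longleftrightarrow>
     (\<forall>S\<in>W. kc_pair K S) \<and>
     (\<forall>S S'. S \<in> W \<and> seq_iso K S S' \<longrightarrow> S' \<in> W) \<and>
     closed_dsum K W \<and>
     (\<forall>A\<in>Ob K. adm_monic K W A (idm K A) A \<and> adm_epic K W A (idm K A) A) \<and>
     (\<forall>A i B d C A' a. (A, i, B, d, C) \<in> W \<and> A' \<in> Ob K \<and> a \<in> Hom K A A' \<longrightarrow>
        (\<exists>P f' a'. is_pushout K A B A' P i a f' a' \<and> adm_monic K W A' f' P)) \<and>
     (\<forall>A i B d C C' c. (A, i, B, d, C) \<in> W \<and> C' \<in> Ob K \<and> c \<in> Hom K C' C \<longrightarrow>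
        (\<exists>P d' c'. is_pullback K B C C' P d c d' c' \<and> adm_epic K W P d' C'))"

section \<open>Additive bifunctors A^op \<times> A \<rightarrow> Ab\<close>

text \<open>Ecar E C A is the group E(C,A); Emap E C A C' A' c a : E(C,A) \<rightarrow> E(C',A')
  is E(c,a) for c : C' \<rightarrow> C and a : A \<rightarrow> A'.\<close>
record ('o,'m,'e) bifun =
  Ecar  :: "'o \<Rightarrow> 'o \<Rightarrow> 'e set"
  Eadd  :: "'o \<Rightarrow> 'o \<Rightarrow> 'e \<Rightarrow> 'e \<Rightarrow> 'e"
  Ezero :: "'o \<Rightarrow> 'o \<Rightarrow> 'e"
  Emap  :: "'o \<Rightarrow> 'o \<Rightarrow> 'o \<Rightarrow> 'o \<Rightarrow> 'm \<Rightarrow> 'm \<Rightarrow> 'e \<Rightarrow> 'e"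

definition ext_grp :: "('o,'m,'e) bifun \<Rightarrow> 'o \<Rightarrow> 'o \<Rightarrow> 'e monoid" where
  "ext_grp E C A = \<lparr>carrier = Ecar E C A, mult = Eadd E C A, one = Ezero E C A\<rparr>"

definition additive_bifunctor :: "('o,'m) precat \<Rightarrow> ('o,'m,'e) bifun \<Rightarrow> bool" where
  "additive_bifunctor K E \<longleftrightarrow>
     (\<forall>C\<in>Ob K. \<forall>A\<in>Ob K. comm_group (ext_grp E C A)) \<and>
     (\<forall>C\<in>Ob K. \<forall>A\<in>Ob K. \<forall>C'\<in>Ob K. \<forall>A'\<in>Ob K. \<forall>c\<in>Hom K C' C. \<forall>a\<in>Hom K A A'.
        (\<forall>\<delta>\<in>Ecar E C A. Emap E C A C' A' c a \<delta> \<in> Ecar E C' A') \<and>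
        (\<forall>\<delta>\<in>Ecar E C A. \<forall>\<delta>'\<in>Ecar E C A.
           Emap E C A C' A' c a (Eadd E C A \<delta> \<delta>') =
           Eadd E C' A' (Emap E C A C' A' c a \<delta>) (Emap E C A C' A' c a \<delta>'))) \<and>
     (\<forall>C\<in>Ob K. \<forall>A\<in>Ob K. \<forall>\<delta>\<in>Ecar E C A. Emap E C A C A (idm K C) (idm K A) \<delta> = \<delta>) \<and>
     (\<forall>C\<in>Ob K. \<forall>A\<in>Ob K. \<forall>C'\<in>Ob K. \<forall>A'\<in>Ob K. \<forall>C''\<in>Ob K. \<forall>A''\<in>Ob K.
        \<forall>c\<in>Hom K C' C. \<forall>a\<in>Hom K A A'. \<forall>c'\<in>Hom K C'' C'. \<forall>a'\<in>Hom K A' A''.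
        \<forall>\<delta>\<in>Ecar E C A.
          Emap E C' A' C'' A'' c' a' (Emap E C A C' A' c a \<delta>) =
          Emap E C A C'' A'' (cmp K c c') (cmp K a' a) \<delta>) \<and>
     (\<forall>C\<in>Ob K. \<forall>A\<in>Ob K. \<forall>C'\<in>Ob K. \<forall>c1\<in>Hom K C' C. \<forall>c2\<in>Hom K C' C. \<forall>\<delta>\<in>Ecar E C A.
        Emap E C A C' A (hadd K C' C c1 c2) (idm K A) \<delta> =
        Eadd E C' A (Emap E C A C' A c1 (idm K A) \<delta>) (Emap E C A C' A c2 (idm K A) \<delta>)) \<and>
     (\<forall>C\<in>Ob K. \<forall>A\<in>Ob K. \<forall>A'\<in>Ob K. \<forall>a1\<in>Hom K A A'. \<forall>a2\<in>Hom K A A'. \<forall>\<delta>\<in>Ecar E C A.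
        Emap E C A C A' (idm K C) (hadd K A A' a1 a2) \<delta> =
        Eadd E C A' (Emap E C A C A' (idm K C) a1 \<delta>) (Emap E C A C A' (idm K C) a2 \<delta>))"

text \<open>a_* \<delta> for \<delta> \<in> E(C,A), a : A \<rightarrow> A'; and c^* \<rho> for \<rho> \<in> E(C,A), c : C' \<rightarrow> C.\<close>
definition pushE :: "('o,'m) precat \<Rightarrow> ('o,'m,'e) bifun \<Rightarrow> 'o \<Rightarrow> 'o \<Rightarrow> 'o \<Rightarrow> 'm \<Rightarrow> 'e \<Rightarrow> 'e" where
  "pushE K E C A A' a \<delta> = Emap E C A C A' (idm K C) a \<delta>"

definition pullE :: "('o,'m) precat \<Rightarrow> ('o,'m,'e) bifun \<Rightarrow> 'o \<Rightarrow> 'o \<Rightarrow> 'o \<Rightarrow> 'm \<Rightarrow> 'e \<Rightarrow> 'e" where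
  "pullE K E C C' A c \<rho> = Emap E C A C' A c (idm K A) \<rho>"

section \<open>Realizations and weakly extriangulated categories\<close>

definition weak_cokernel :: "('o,'m) precat \<Rightarrow> 'o \<Rightarrow> 'o \<Rightarrow> 'o \<Rightarrow> 'm \<Rightarrow> 'm \<Rightarrow> bool" where
  "weak_cokernel K A B C f g \<longleftrightarrow> (\<forall>X\<in>Ob K.
     {cmp K y g | y. y \<in> Hom K C X} = {x \<in> Hom K B X. cmp K x f = hzero K A X})"

definition weak_kernel :: "('o,'m) precat \<Rightarrow> 'o \<Rightarrow> 'o \<Rightarrow> 'o \<Rightarrow> 'm \<Rightarrow> 'm \<Rightarrow> bool" where
  "weak_kernel K A B C f g \<longleftrightarrow> (\<forall>X\<in>Ob K.
     {cmp K f y | y. y \<in> Hom K X A} = {x \<in> Hom K X B. cmp K g x = hzero K X C})"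

definition weak_kc_pair :: "('o,'m) precat \<Rightarrow> ('o,'m) seq \<Rightarrow> bool" where
  "weak_kc_pair K S = (case S of (A, f, B, g, C) \<Rightarrow>
     A \<in> Ob K \<and> B \<in> Ob K \<and> C \<in> Ob K \<and> f \<in> Hom K A B \<and> g \<in> Hom K B C \<and>
     weak_kernel K A B C f g \<and> weak_cokernel K A B C f g)"

definition seq_equiv :: "('o,'m) precat \<Rightarrow> ('o,'m) seq \<Rightarrow> ('o,'m) seq \<Rightarrow> bool" where
  "seq_equiv K S S' = (case S of (A, f, B, g, C) \<Rightarrow> case S' of (A', f', B', g', C') \<Rightarrow>
     A = A' \<and> C = C' \<and> (\<exists>b. is_iso K B B' b \<and> chain_map K S S' (idm K A) b (idm K C)))"

text \<open>s C A \<delta> is the class realizing \<delta> \<in> E(C,A).\<close>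
type_synonym ('o,'m,'e) realiz = "'o \<Rightarrow> 'o \<Rightarrow> 'e \<Rightarrow> ('o,'m) seq set"

definition realization :: "('o,'m) precat \<Rightarrow> ('o,'m,'e) bifun \<Rightarrow> ('o,'m,'e) realiz \<Rightarrow> bool" where
  "realization K E s \<longleftrightarrow>
     (\<forall>C\<in>Ob K. \<forall>A\<in>Ob K. \<forall>\<delta>\<in>Ecar E C A. \<exists>f B g.
        weak_kc_pair K (A, f, B, g, C) \<and>
        s C A \<delta> = {S'. weak_kc_pair K S' \<and> seq_equiv K (A, f, B, g, C) S'}) \<and>
     (\<forall>C\<in>Ob K. \<forall>A\<in>Ob K. \<forall>C'\<in>Ob K. \<forall>A'\<in>Ob K. \<forall>\<delta>\<in>Ecar E C A. \<forall>\<rho>\<in>Ecar E C' A'.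
        \<forall>a\<in>Hom K A A'. \<forall>c\<in>Hom K C C'.
        pushE K E C A A' a \<delta> = pullE K E C' C A' c \<rho> \<longrightarrow>
        (\<forall>S\<in>s C A \<delta>. \<forall>S'\<in>s C' A' \<rho>. \<exists>b. chain_map K S S' a b c))"

definition exact_realization :: "('o,'m) precat \<Rightarrow> ('o,'m,'e) bifun \<Rightarrow> ('o,'m,'e) realiz \<Rightarrow> bool" where
  "exact_realization K E s \<longleftrightarrow> realization K E s \<and>
     (\<forall>C\<in>Ob K. \<forall>A\<in>Ob K. \<forall>\<delta>\<in>Ecar E C A. \<forall>f B g. (A, f, B, g, C) \<in> s C A \<delta> \<longrightarrow>
        (\<forall>X\<in>Ob K.
           {cmp K y g | y. y \<in> Hom K C X} = {x \<in> Hom K B X. cmp K x f = hzero K A X} \<and>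
           {cmp K x f | x. x \<in> Hom K B X} = {a \<in> Hom K A X. pushE K E C A X a \<delta> = Ezero E C X} \<and>
           {cmp K f y | y. y \<in> Hom K X A} = {x \<in> Hom K X B. cmp K g x = hzero K X C} \<and>
           {cmp K g y | y. y \<in> Hom K X B} = {c \<in> Hom K X C. pullE K E C X A c \<delta> = Ezero E X A})) \<and>
     (\<forall>Z. zero_obj K Z \<longrightarrow> (\<forall>A\<in>Ob K.
        (A, idm K A, A, hzero K A Z, Z) \<in> s Z A (Ezero E Z A) \<and>
        (Z, hzero K Z A, A, idm K A, A) \<in> s A Z (Ezero E A Z)))"

text \<open>Mapping cone of (1_A, b, c) from A-f->B-g->C to A-f'->B'-g'->C', using the biproduct
  (S,i1,i2,p1,p2) of C and B':  B --[-g; b]--> C \<oplus> B' --[c g']--> C'.\<close>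
definition mcone ::
  "('o,'m) precat \<Rightarrow> 'o \<Rightarrow> 'o \<Rightarrow> 'o \<Rightarrow> 'm \<Rightarrow> 'm \<Rightarrow> 'm \<Rightarrow> 'm \<Rightarrow>
   'o \<Rightarrow> 'm \<Rightarrow> 'm \<Rightarrow> 'm \<Rightarrow> 'm \<Rightarrow> ('o,'m) seq" where
  "mcone K B C C' g b c g' S i1 i2 p1 p2 =
     (B, hadd K B S (cmp K i1 (hneg K B C g)) (cmp K i2 b),
      S, hadd K S C' (cmp K c p1) (cmp K g' p2), C')"

text \<open>Mapping cocone of (a, b, 1_C) from A'-f'->B'-g'->C to A-f->B-g->C, using the biproduct
  (S,i1,i2,p1,p2) of A and B':  A' --[a; f']--> A \<oplus> B' --[-f b]--> B.\<close>
definition mcocone ::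
  "('o,'m) precat \<Rightarrow> 'o \<Rightarrow> 'o \<Rightarrow> 'o \<Rightarrow> 'm \<Rightarrow> 'm \<Rightarrow> 'm \<Rightarrow> 'm \<Rightarrow>
   'o \<Rightarrow> 'm \<Rightarrow> 'm \<Rightarrow> 'm \<Rightarrow> 'm \<Rightarrow> ('o,'m) seq" where
  "mcocone K A' A B a f' f b S i1 i2 p1 p2 =
     (A', hadd K A' S (cmp K i1 a) (cmp K i2 f'),
      S, hadd K S B (cmp K (hneg K A B f) p1) (cmp K b p2), B)"

definition EA2 :: "('o,'m) precat \<Rightarrow> ('o,'m,'e) bifun \<Rightarrow> ('o,'m,'e) realiz \<Rightarrow> bool" where
  "EA2 K E s \<longleftrightarrow>
     (\<forall>C'\<in>Ob K. \<forall>A\<in>Ob K. \<forall>C\<in>Ob K. \<forall>\<rho>\<in>Ecar E C' A. \<forall>c\<in>Hom K C C'.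
        \<forall>f B g f' B' g'.
          (A, f, B, g, C) \<in> s C A (pullE K E C' C A c \<rho>) \<and> (A, f', B', g', C') \<in> s C' A \<rho> \<longrightarrow>
          (\<exists>b. chain_map K (A, f, B, g, C) (A, f', B', g', C') (idm K A) b c \<and>
             (\<forall>S i1 i2 p1 p2. biproduct K C B' S i1 i2 p1 p2 \<longrightarrow>
                mcone K B C C' g b c g' S i1 i2 p1 p2 \<in> s C' B (pushE K E C' A B f \<rho>))))"

definition EA2op :: "('o,'m) precat \<Rightarrow> ('o,'m,'e) bifun \<Rightarrow> ('o,'m,'e) realiz \<Rightarrow> bool" where
  "EA2op K E s \<longleftrightarrow>
     (\<forall>C\<in>Ob K. \<forall>A'\<in>Ob K. \<forall>A\<in>Ob K. \<forall>\<delta>\<in>Ecar E C A'. \<forall>a\<in>Hom K A' A.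
        \<forall>f B g f' B' g'.
          (A, f, B, g, C) \<in> s C A (pushE K E C A' A a \<delta>) \<and> (A', f', B', g', C) \<in> s C A' \<delta> \<longrightarrow>
          (\<exists>b. chain_map K (A', f', B', g', C) (A, f, B, g, C) a b (idm K C) \<and>
             (\<forall>S i1 i2 p1 p2. biproduct K A B' S i1 i2 p1 p2 \<longrightarrow>
                mcocone K A' A B a f' f b S i1 i2 p1 p2 \<in> s B A' (pullE K E C B A' g \<delta>))))"

definition weakly_extriangulated ::
  "('o,'m) precat \<Rightarrow> ('o,'m,'e) bifun \<Rightarrow> ('o,'m,'e) realiz \<Rightarrow> bool" where
  "weakly_extriangulated K E s \<longleftrightarrow> additive_category K \<and> additive_bifunctor K E \<and>
     exact_realization K E s \<and> EA2 K E s \<and> EA2op K E s"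

definition conflations :: "('o,'m) precat \<Rightarrow> ('o,'m,'e) bifun \<Rightarrow> ('o,'m,'e) realiz \<Rightarrow> ('o,'m) seq set" where
  "conflations K E s = {S. \<exists>C\<in>Ob K. \<exists>A\<in>Ob K. \<exists>\<delta>\<in>Ecar E C A. S \<in> s C A \<delta>}"

end

theory Submission
  imports Defs
begin

text \<open>Conflations are weak kernel-cokernel pairs; since inflations are monic and deflations epic,
  the factorizations are unique and conflations are kernel-cokernel pairs. An endomorphism of a weak
  kernel-cokernel pair fixing both end terms differs from the identity by a square-zero map and is
  therefore an automorphism, so any sequence admitting chain maps in both directions, with identity
  ends, to a realization of an extension is again a realization of it. Together with (R0) this gives
  closure under isomorphisms and, for a suitable sum of the two transported extensions, under
  direct sums. By (EA2)^op the mapping cocone of the comparison map to a realization of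
  a_* \<delta> is a conflation, hence a cokernel sequence, which makes the comparison square a pushout;
  pullbacks are dual, via (EA2). Identities are admissible by (R2).\<close>

section \<open>Preadditive categories\<close>

locale preadditive_cat =
  fixes K :: "('o,'m) precat"
  assumes preadditive: "preadditive K"
begin

lemma is_category: "is_category K"
  using preadditive unfolding preadditive_def by blast

lemma id_hom [simp]: "X \<in> Ob K \<Longrightarrow> idm K X \<in> Hom K X X"
  using is_category unfolding is_category_def by blast

lemma comp_hom:
  "\<lbrakk>X \<in> Ob K; Y \<in> Ob K; Z \<in> Ob K; f \<in> Hom K X Y; g \<in> Hom K Y Z\<rbrakk> \<Longrightarrow> cmp K g f \<in> Hom K X Z"
  using is_category unfolding is_category_def by blast

lemma comp_assoc:
  "\<lbrakk>W \<in> Ob K; X \<in> Ob K; Y \<in> Ob K; Z \<in> Ob K; f \<in> Hom K W X; g \<in> Hom K X Y; h \<in> Hom K Y Z\<rbrakk>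
   \<Longrightarrow> cmp K (cmp K h g) f = cmp K h (cmp K g f)"
  using is_category unfolding is_category_def by metis

lemma comp_id_left [simp]: "\<lbrakk>X \<in> Ob K; Y \<in> Ob K; f \<in> Hom K X Y\<rbrakk> \<Longrightarrow> cmp K (idm K Y) f = f"
  using is_category unfolding is_category_def by blast

lemma comp_id_right [simp]: "\<lbrakk>X \<in> Ob K; Y \<in> Ob K; f \<in> Hom K X Y\<rbrakk> \<Longrightarrow> cmp K f (idm K X) = f"
  using is_category unfolding is_category_def by blast

lemma hom_group: "\<lbrakk>X \<in> Ob K; Y \<in> Ob K\<rbrakk> \<Longrightarrow> group (hom_grp K X Y)"
  using preadditive unfolding preadditive_def comm_group_def by blast

lemma hadd_hom: "\<lbrakk>X \<in> Ob K; Y \<in> Ob K; f \<in> Hom K X Y; g \<in> Hom K X Y\<rbrakk> \<Longrightarrow> hadd K X Y f g \<in> Hom K X Y"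
  using group.is_monoid[OF hom_group, THEN monoid.m_closed, of X Y] by (simp add: hom_grp_def)

lemma hzero_hom [simp]: "\<lbrakk>X \<in> Ob K; Y \<in> Ob K\<rbrakk> \<Longrightarrow> hzero K X Y \<in> Hom K X Y"
  using group.is_monoid[OF hom_group, THEN monoid.one_closed, of X Y] by (simp add: hom_grp_def)

lemma hneg_hom: "\<lbrakk>X \<in> Ob K; Y \<in> Ob K; f \<in> Hom K X Y\<rbrakk> \<Longrightarrow> hneg K X Y f \<in> Hom K X Y"
  using group.inv_closed[OF hom_group, of X Y] by (simp add: hom_grp_def hneg_def)

lemma hadd_assoc:
  "\<lbrakk>X \<in> Ob K; Y \<in> Ob K; f \<in> Hom K X Y; g \<in> Hom K X Y; h \<in> Hom K X Y\<rbrakk>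
   \<Longrightarrow> hadd K X Y (hadd K X Y f g) h = hadd K X Y f (hadd K X Y g h)"
  using group.is_monoid[OF hom_group, THEN monoid.m_assoc, of X Y] by (simp add: hom_grp_def)

lemma hadd_comm:
  "\<lbrakk>X \<in> Ob K; Y \<in> Ob K; f \<in> Hom K X Y; g \<in> Hom K X Y\<rbrakk> \<Longrightarrow> hadd K X Y f g = hadd K X Y g f"
  using preadditive comm_monoid.m_comm[of "hom_grp K X Y"]
  unfolding preadditive_def comm_group_def by (simp add: hom_grp_def)

lemma hadd_zero_left [simp]: "\<lbrakk>X \<in> Ob K; Y \<in> Ob K; f \<in> Hom K X Y\<rbrakk> \<Longrightarrow> hadd K X Y (hzero K X Y) f = f"
  using group.is_monoid[OF hom_group, THEN monoid.l_one, of X Y] by (simp add: hom_grp_def)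

lemma hadd_zero_right [simp]: "\<lbrakk>X \<in> Ob K; Y \<in> Ob K; f \<in> Hom K X Y\<rbrakk> \<Longrightarrow> hadd K X Y f (hzero K X Y) = f"
  using group.is_monoid[OF hom_group, THEN monoid.r_one, of X Y] by (simp add: hom_grp_def)

lemma hadd_hneg_right [simp]:
  "\<lbrakk>X \<in> Ob K; Y \<in> Ob K; f \<in> Hom K X Y\<rbrakk> \<Longrightarrow> hadd K X Y f (hneg K X Y f) = hzero K X Y"
  using group.r_inv[OF hom_group, of X Y] by (simp add: hom_grp_def hneg_def)

lemma hadd_hneg_left [simp]:
  "\<lbrakk>X \<in> Ob K; Y \<in> Ob K; f \<in> Hom K X Y\<rbrakk> \<Longrightarrow> hadd K X Y (hneg K X Y f) f = hzero K X Y"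
  using group.l_inv[OF hom_group, of X Y] by (simp add: hom_grp_def hneg_def)

lemma hadd_idem_eq_zero:
  "\<lbrakk>X \<in> Ob K; Y \<in> Ob K; f \<in> Hom K X Y; hadd K X Y f f = f\<rbrakk> \<Longrightarrow> f = hzero K X Y"
  using group.l_cancel_one[OF hom_group, of X Y f f] by (simp add: hom_grp_def)

lemma hneg_unique:
  "\<lbrakk>X \<in> Ob K; Y \<in> Ob K; f \<in> Hom K X Y; g \<in> Hom K X Y; hadd K X Y f g = hzero K X Y\<rbrakk>
   \<Longrightarrow> g = hneg K X Y f"
  using group.inv_equality[OF hom_group, of X Y g f]
  by (simp add: hom_grp_def hneg_def hadd_comm[of X Y f g])

lemma hneg_hneg [simp]: "\<lbrakk>X \<in> Ob K; Y \<in> Ob K; f \<in> Hom K X Y\<rbrakk> \<Longrightarrow> hneg K X Y (hneg K X Y f) = f"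
  by (metis hadd_hneg_left hneg_hom hneg_unique)

lemma comp_distrib_left:
  "\<lbrakk>X \<in> Ob K; Y \<in> Ob K; Z \<in> Ob K; f \<in> Hom K X Y; f' \<in> Hom K X Y; g \<in> Hom K Y Z\<rbrakk>
   \<Longrightarrow> cmp K g (hadd K X Y f f') = hadd K X Z (cmp K g f) (cmp K g f')"
  using preadditive unfolding preadditive_def by blast

lemma comp_distrib_right:
  "\<lbrakk>X \<in> Ob K; Y \<in> Ob K; Z \<in> Ob K; f \<in> Hom K X Y; g \<in> Hom K Y Z; g' \<in> Hom K Y Z\<rbrakk>
   \<Longrightarrow> cmp K (hadd K Y Z g g') f = hadd K X Z (cmp K g f) (cmp K g' f)"
  using preadditive unfolding preadditive_def by blast

lemma comp_zero_right [simp]: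
  "\<lbrakk>X \<in> Ob K; Y \<in> Ob K; Z \<in> Ob K; g \<in> Hom K Y Z\<rbrakk> \<Longrightarrow> cmp K g (hzero K X Y) = hzero K X Z"
  using comp_distrib_left[of X Y Z "hzero K X Y" "hzero K X Y" g] comp_hom[of X Y Z "hzero K X Y" g]
  by (intro hadd_idem_eq_zero) auto

lemma comp_zero_left [simp]:
  "\<lbrakk>X \<in> Ob K; Y \<in> Ob K; Z \<in> Ob K; f \<in> Hom K X Y\<rbrakk> \<Longrightarrow> cmp K (hzero K Y Z) f = hzero K X Z"
  using comp_distrib_right[of X Y Z f "hzero K Y Z" "hzero K Y Z"] comp_hom[of X Y Z f "hzero K Y Z"]
  by (intro hadd_idem_eq_zero) auto

lemma comp_hneg_right:
  "\<lbrakk>X \<in> Ob K; Y \<in> Ob K; Z \<in> Ob K; f \<in> Hom K X Y; g \<in> Hom K Y Z\<rbrakk>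
   \<Longrightarrow> cmp K g (hneg K X Y f) = hneg K X Z (cmp K g f)"
  using comp_distrib_left[of X Y Z f "hneg K X Y f" g] comp_hom[of X Y Z _ g] hneg_hom[of X Y f]
  by (intro hneg_unique) auto

lemma comp_hneg_left:
  "\<lbrakk>X \<in> Ob K; Y \<in> Ob K; Z \<in> Ob K; f \<in> Hom K X Y; g \<in> Hom K Y Z\<rbrakk>
   \<Longrightarrow> cmp K (hneg K Y Z g) f = hneg K X Z (cmp K g f)"
  using comp_distrib_right[of X Y Z f g "hneg K Y Z g"] comp_hom[of X Y Z f] hneg_hom[of Y Z g]
  by (intro hneg_unique) auto

lemma zero_obj_id_eq_zero: "zero_obj K Z \<Longrightarrow> idm K Z = hzero K Z Z"
  unfolding zero_obj_def by (metis hzero_hom id_hom)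

section \<open>Biproducts\<close>

lemma biproductD:
  assumes "biproduct K X Y S i1 i2 p1 p2"
  shows "S \<in> Ob K" "i1 \<in> Hom K X S" "i2 \<in> Hom K Y S" "p1 \<in> Hom K S X" "p2 \<in> Hom K S Y"
    "cmp K p1 i1 = idm K X" "cmp K p2 i2 = idm K Y"
    "cmp K p1 i2 = hzero K Y X" "cmp K p2 i1 = hzero K X Y"
    "hadd K S S (cmp K i1 p1) (cmp K i2 p2) = idm K S"
  using assms unfolding biproduct_def by auto

lemma biproduct_hom_from_decomp:
  assumes bp: "biproduct K X Y S i1 i2 p1 p2" and ob: "X \<in> Ob K" "Y \<in> Ob K" "W \<in> Ob K"
    and h: "h \<in> Hom K S W"
  shows "h = hadd K S W (cmp K (cmp K h i1) p1) (cmp K (cmp K h i2) p2)"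
proof -
  note b = biproductD[OF bp]
  have "h = cmp K h (idm K S)" using h b ob by simp
  also have "\<dots> = hadd K S W (cmp K h (cmp K i1 p1)) (cmp K h (cmp K i2 p2))"
    using b comp_distrib_left[of S S W "cmp K i1 p1" "cmp K i2 p2" h]
      comp_hom[of S X S p1 i1] comp_hom[of S Y S p2 i2] ob h by simp
  also have "\<dots> = hadd K S W (cmp K (cmp K h i1) p1) (cmp K (cmp K h i2) p2)"
    using comp_assoc[of S X S W p1 i1 h] comp_assoc[of S Y S W p2 i2 h] b ob h by simp
  finally show ?thesis .
qed

lemma biproduct_hom_into_decomp:
  assumes bp: "biproduct K X Y S i1 i2 p1 p2" and ob: "X \<in> Ob K" "Y \<in> Ob K" "W \<in> Ob K"
    and h: "h \<in> Hom K W S"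
  shows "h = hadd K W S (cmp K i1 (cmp K p1 h)) (cmp K i2 (cmp K p2 h))"
proof -
  note b = biproductD[OF bp]
  have "h = cmp K (idm K S) h" using h b ob by simp
  also have "\<dots> = hadd K W S (cmp K (cmp K i1 p1) h) (cmp K (cmp K i2 p2) h)"
    using b comp_distrib_right[of W S S h "cmp K i1 p1" "cmp K i2 p2"]
      comp_hom[of S X S p1 i1] comp_hom[of S Y S p2 i2] ob h by simp
  also have "\<dots> = hadd K W S (cmp K i1 (cmp K p1 h)) (cmp K i2 (cmp K p2 h))"
    using comp_assoc[of W S X S h p1 i1] comp_assoc[of W S Y S h p2 i2] b ob h by simp
  finally show ?thesis .
qed

lemma biproduct_hom_from_eqI:
  assumes bp: "biproduct K X Y S i1 i2 p1 p2" and ob: "X \<in> Ob K" "Y \<in> Ob K" "W \<in> Ob K"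
    and h: "h \<in> Hom K S W" "h' \<in> Hom K S W"
    and "cmp K h i1 = cmp K h' i1" "cmp K h i2 = cmp K h' i2"
  shows "h = h'"
  using biproduct_hom_from_decomp[OF bp ob h(1)] biproduct_hom_from_decomp[OF bp ob h(2)] assms(7,8)
  by simp

lemma biproduct_hom_into_eqI:
  assumes bp: "biproduct K X Y S i1 i2 p1 p2" and ob: "X \<in> Ob K" "Y \<in> Ob K" "W \<in> Ob K"
    and h: "h \<in> Hom K W S" "h' \<in> Hom K W S"
    and "cmp K p1 h = cmp K p1 h'" "cmp K p2 h = cmp K p2 h'"
  shows "h = h'"
  using biproduct_hom_into_decomp[OF bp ob h(1)] biproduct_hom_into_decomp[OF bp ob h(2)] assms(7,8)
  by simp

lemma biproduct_copair:
  assumes bp: "biproduct K X Y S i1 i2 p1 p2" and ob: "X \<in> Ob K" "Y \<in> Ob K" "W \<in> Ob K"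
    and ab: "a \<in> Hom K X W" "b \<in> Hom K Y W"
  shows "hadd K S W (cmp K a p1) (cmp K b p2) \<in> Hom K S W"
    "cmp K (hadd K S W (cmp K a p1) (cmp K b p2)) i1 = a"
    "cmp K (hadd K S W (cmp K a p1) (cmp K b p2)) i2 = b"
proof -
  note b = biproductD[OF bp]
  have h1: "cmp K a p1 \<in> Hom K S W" and h2: "cmp K b p2 \<in> Hom K S W"
    using comp_hom[of S X W p1 a] comp_hom[of S Y W p2 b] b ob ab by auto
  show "hadd K S W (cmp K a p1) (cmp K b p2) \<in> Hom K S W"
    using hadd_hom[OF b(1) ob(3) h1 h2] .
  have "cmp K (hadd K S W (cmp K a p1) (cmp K b p2)) i1
      = hadd K X W (cmp K a (cmp K p1 i1)) (cmp K b (cmp K p2 i1))"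
    using comp_distrib_right[of X S W i1 "cmp K a p1" "cmp K b p2"]
      comp_assoc[of X S X W i1 p1 a] comp_assoc[of X S Y W i1 p2 b] h1 h2 b ob ab by simp
  then show "cmp K (hadd K S W (cmp K a p1) (cmp K b p2)) i1 = a" using b ob ab by simp
  have "cmp K (hadd K S W (cmp K a p1) (cmp K b p2)) i2
      = hadd K Y W (cmp K a (cmp K p1 i2)) (cmp K b (cmp K p2 i2))"
    using comp_distrib_right[of Y S W i2 "cmp K a p1" "cmp K b p2"]
      comp_assoc[of Y S X W i2 p1 a] comp_assoc[of Y S Y W i2 p2 b] h1 h2 b ob ab by simp
  then show "cmp K (hadd K S W (cmp K a p1) (cmp K b p2)) i2 = b" using b ob ab by simp
qed

lemma biproduct_pair:
  assumes bp: "biproduct K X Y S i1 i2 p1 p2" and ob: "X \<in> Ob K" "Y \<in> Ob K" "W \<in> Ob K"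
    and ab: "a \<in> Hom K W X" "b \<in> Hom K W Y"
  shows "hadd K W S (cmp K i1 a) (cmp K i2 b) \<in> Hom K W S"
    "cmp K p1 (hadd K W S (cmp K i1 a) (cmp K i2 b)) = a"
    "cmp K p2 (hadd K W S (cmp K i1 a) (cmp K i2 b)) = b"
proof -
  note b = biproductD[OF bp]
  have h1: "cmp K i1 a \<in> Hom K W S" and h2: "cmp K i2 b \<in> Hom K W S"
    using comp_hom[of W X S a i1] comp_hom[of W Y S b i2] b ob ab by auto
  show "hadd K W S (cmp K i1 a) (cmp K i2 b) \<in> Hom K W S"
    using hadd_hom[OF ob(3) b(1) h1 h2] .
  have "cmp K p1 (hadd K W S (cmp K i1 a) (cmp K i2 b))
      = hadd K W X (cmp K (cmp K p1 i1) a) (cmp K (cmp K p1 i2) b)"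
    using comp_distrib_left[of W S X "cmp K i1 a" "cmp K i2 b" p1]
      comp_assoc[of W X S X a i1 p1] comp_assoc[of W Y S X b i2 p1] h1 h2 b ob ab by simp
  then show "cmp K p1 (hadd K W S (cmp K i1 a) (cmp K i2 b)) = a" using b ob ab by simp
  have "cmp K p2 (hadd K W S (cmp K i1 a) (cmp K i2 b))
      = hadd K W Y (cmp K (cmp K p2 i1) a) (cmp K (cmp K p2 i2) b)"
    using comp_distrib_left[of W S Y "cmp K i1 a" "cmp K i2 b" p2]
      comp_assoc[of W X S Y a i1 p2] comp_assoc[of W Y S Y b i2 p2] h1 h2 b ob ab by simp
  then show "cmp K p2 (hadd K W S (cmp K i1 a) (cmp K i2 b)) = b" using b ob ab by simp
qed

lemma biproduct_diag:
  assumes b1: "biproduct K X1 X2 S1 i1 i2 p1 p2" and b2: "biproduct K Y1 Y2 S2 j1 j2 q1 q2"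
    and ob: "X1 \<in> Ob K" "X2 \<in> Ob K" "Y1 \<in> Ob K" "Y2 \<in> Ob K"
    and h: "h1 \<in> Hom K X1 Y1" "h2 \<in> Hom K X2 Y2"
    and M: "M = hadd K S1 S2 (cmp K j1 (cmp K h1 p1)) (cmp K j2 (cmp K h2 p2))"
  shows "M \<in> Hom K S1 S2" "cmp K M i1 = cmp K j1 h1" "cmp K M i2 = cmp K j2 h2"
    "cmp K q1 M = cmp K h1 p1" "cmp K q2 M = cmp K h2 p2"
proof -
  note B1 = biproductD[OF b1] and B2 = biproductD[OF b2]
  have "M = hadd K S1 S2 (cmp K (cmp K j1 h1) p1) (cmp K (cmp K j2 h2) p2)"
    unfolding M using comp_assoc[of S1 X1 Y1 S2 p1 h1 j1] comp_assoc[of S1 X2 Y2 S2 p2 h2 j2] B1 B2 h ob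
    by simp
  moreover have "cmp K j1 h1 \<in> Hom K X1 S2" "cmp K j2 h2 \<in> Hom K X2 S2"
    using comp_hom[of X1 Y1 S2 h1 j1] comp_hom[of X2 Y2 S2 h2 j2] B2 h ob by auto
  ultimately show "M \<in> Hom K S1 S2" "cmp K M i1 = cmp K j1 h1" "cmp K M i2 = cmp K j2 h2"
    using biproduct_copair[OF b1 ob(1,2) B2(1)] by auto
  have "cmp K h1 p1 \<in> Hom K S1 Y1" "cmp K h2 p2 \<in> Hom K S1 Y2"
    using comp_hom[of S1 X1 Y1 p1 h1] comp_hom[of S1 X2 Y2 p2 h2] B1 h ob by auto
  then show "cmp K q1 M = cmp K h1 p1" "cmp K q2 M = cmp K h2 p2"
    using biproduct_pair[OF b2 ob(3,4) B1(1)] M by auto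
qed

section \<open>Weak kernel-cokernel pairs and chain maps\<close>

lemma weak_kc_pairD:
  assumes "weak_kc_pair K (A, f, B, g, C)"
  shows "A \<in> Ob K" "B \<in> Ob K" "C \<in> Ob K" "f \<in> Hom K A B" "g \<in> Hom K B C"
    "cmp K g f = hzero K A C"
    "\<And>X x. \<lbrakk>X \<in> Ob K; x \<in> Hom K X B; cmp K g x = hzero K X C\<rbrakk> \<Longrightarrow> \<exists>y\<in>Hom K X A. x = cmp K f y"
    "\<And>X x. \<lbrakk>X \<in> Ob K; x \<in> Hom K B X; cmp K x f = hzero K A X\<rbrakk> \<Longrightarrow> \<exists>y\<in>Hom K C X. x = cmp K y g"
proof -
  note w = assms[unfolded weak_kc_pair_def, simplified]
  show ob: "A \<in> Ob K" "B \<in> Ob K" "C \<in> Ob K" "f \<in> Hom K A B" "g \<in> Hom K B C"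
    using w by auto
  have ker: "\<And>X. X \<in> Ob K \<Longrightarrow>
      {cmp K f y | y. y \<in> Hom K X A} = {x \<in> Hom K X B. cmp K g x = hzero K X C}"
    using w unfolding weak_kernel_def by blast
  have coker: "\<And>X. X \<in> Ob K \<Longrightarrow>
      {cmp K y g | y. y \<in> Hom K C X} = {x \<in> Hom K B X. cmp K x f = hzero K A X}"
    using w unfolding weak_cokernel_def by blast
  have "cmp K f (idm K A) \<in> {cmp K f y | y. y \<in> Hom K A A}"
    using ob by (auto intro!: exI[of _ "idm K A"])
  then show "cmp K g f = hzero K A C" using ker[OF ob(1)] ob by auto
  show "\<And>X x. \<lbrakk>X \<in> Ob K; x \<in> Hom K X B; cmp K g x = hzero K X C\<rbrakk> \<Longrightarrow> \<exists>y\<in>Hom K X A. x = cmp K f y"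
    using ker by blast
  show "\<And>X x. \<lbrakk>X \<in> Ob K; x \<in> Hom K B X; cmp K x f = hzero K A X\<rbrakk> \<Longrightarrow> \<exists>y\<in>Hom K C X. x = cmp K y g"
    using coker by blast
qed

lemma weak_kc_pairI:
  assumes ob: "A \<in> Ob K" "B \<in> Ob K" "C \<in> Ob K" "f \<in> Hom K A B" "g \<in> Hom K B C"
    and gf: "cmp K g f = hzero K A C"
    and ker: "\<And>X x. \<lbrakk>X \<in> Ob K; x \<in> Hom K X B; cmp K g x = hzero K X C\<rbrakk> \<Longrightarrow> \<exists>y\<in>Hom K X A. x = cmp K f y"
    and coker: "\<And>X x. \<lbrakk>X \<in> Ob K; x \<in> Hom K B X; cmp K x f = hzero K A X\<rbrakk> \<Longrightarrow> \<exists>y\<in>Hom K C X. x = cmp K y g"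
  shows "weak_kc_pair K (A, f, B, g, C)"
proof -
  have "weak_kernel K A B C f g" unfolding weak_kernel_def
  proof (intro ballI equalityI subsetI)
    fix X x assume X: "X \<in> Ob K" and "x \<in> {cmp K f y | y. y \<in> Hom K X A}"
    then obtain y where y: "y \<in> Hom K X A" "x = cmp K f y" by auto
    have "cmp K g x = cmp K (cmp K g f) y" using comp_assoc[of X A B C y f g] y ob X by simp
    then show "x \<in> {x \<in> Hom K X B. cmp K g x = hzero K X C}"
      using y ob X gf comp_hom[of X A B y f] by simp
  qed (use ker in blast)
  moreover have "weak_cokernel K A B C f g" unfolding weak_cokernel_def
  proof (intro ballI equalityI subsetI)
    fix X x assume X: "X \<in> Ob K" and "x \<in> {cmp K y g | y. y \<in> Hom K C X}"
    then obtain y where y: "y \<in> Hom K C X" "x = cmp K y g" by auto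
    have "cmp K x f = cmp K y (cmp K g f)" using comp_assoc[of A B C X f g y] y ob X by simp
    then show "x \<in> {x \<in> Hom K B X. cmp K x f = hzero K A X}"
      using y ob X gf comp_hom[of B C X g y] by simp
  qed (use coker in blast)
  ultimately show ?thesis using ob unfolding weak_kc_pair_def by simp
qed

lemma kc_pair_if_mono_epi:
  assumes w: "weak_kc_pair K (A, f, B, g, C)" and mono: "is_mono K A B f" and epi: "is_epi K B C g"
  shows "kc_pair K (A, f, B, g, C)"
proof -
  note W = weak_kc_pairD[OF w]
  have "is_kernel K A B C f g" unfolding is_kernel_def
  proof (intro conjI ballI impI)
    fix X x assume X: "X \<in> Ob K" and "x \<in> Hom K X B" "cmp K g x = hzero K X C"
    then obtain y where "y \<in> Hom K X A" "x = cmp K f y" using W(7) by blast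
    then show "\<exists>!y. y \<in> Hom K X A \<and> cmp K f y = x"
      using mono X unfolding is_mono_def by blast
  qed (use W(4-6) in auto)
  moreover have "is_cokernel K A B C f g" unfolding is_cokernel_def
  proof (intro conjI ballI impI)
    fix X x assume X: "X \<in> Ob K" and "x \<in> Hom K B X" "cmp K x f = hzero K A X"
    then obtain y where "y \<in> Hom K C X" "x = cmp K y g" using W(8) by blast
    then show "\<exists>!y. y \<in> Hom K C X \<and> cmp K y g = x"
      using epi X unfolding is_epi_def by blast
  qed (use W(4-6) in auto)
  ultimately show ?thesis unfolding kc_pair_def using W by simp
qed

lemma is_iso_id: "X \<in> Ob K \<Longrightarrow> is_iso K X X (idm K X)"
  unfolding is_iso_def by (intro conjI bexI[of _ "idm K X"]) auto

lemma is_isoE: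
  assumes "is_iso K X Y f"
  obtains g where "f \<in> Hom K X Y" "g \<in> Hom K Y X" "cmp K g f = idm K X" "cmp K f g = idm K Y"
  using assms unfolding is_iso_def by blast

lemma is_iso_comp:
  assumes ob: "X \<in> Ob K" "Y \<in> Ob K" "Z \<in> Ob K" and f: "is_iso K X Y f" and g: "is_iso K Y Z g"
  shows "is_iso K X Z (cmp K g f)"
proof -
  obtain f' where f': "f \<in> Hom K X Y" "f' \<in> Hom K Y X" "cmp K f' f = idm K X" "cmp K f f' = idm K Y"
    using is_isoE[OF f] .
  obtain g' where g': "g \<in> Hom K Y Z" "g' \<in> Hom K Z Y" "cmp K g' g = idm K Y" "cmp K g g' = idm K Z"
    using is_isoE[OF g] .
  have gf: "cmp K g f \<in> Hom K X Z" using comp_hom[of X Y Z f g] ob f' g' by simp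
  have "cmp K (cmp K f' g') (cmp K g f) = cmp K f' (cmp K (cmp K g' g) f)"
    using comp_assoc[of X Z Y X "cmp K g f" g' f'] comp_assoc[of X Y Z Y f g g'] gf ob f' g' by simp
  then have left: "cmp K (cmp K f' g') (cmp K g f) = idm K X" using f' g' ob by simp
  have "cmp K (cmp K g f) (cmp K f' g') = cmp K g (cmp K (cmp K f f') g')"
    using comp_assoc[of Z Y X Y g' f' f] comp_assoc[of Z Y Y Z g' "cmp K f f'" g]
      comp_assoc[of Z X Y Z "cmp K f' g'" f g] comp_hom[of Z Y X g' f'] comp_hom[of Y X Y f' f]
      ob f' g' by simp
  then have right: "cmp K (cmp K g f) (cmp K f' g') = idm K Z" using f' g' ob by simp
  show ?thesis
    unfolding is_iso_def using left right gf comp_hom[of Z Y X g' f'] ob f' g' by blast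
qed

lemma is_iso_if_comp_isos:
  assumes ob: "X \<in> Ob K" "Y \<in> Ob K" and u: "u \<in> Hom K X Y" and v: "v \<in> Hom K Y X"
    and vu: "is_iso K X X (cmp K v u)" and uv: "is_iso K Y Y (cmp K u v)"
  shows "is_iso K X Y u"
proof -
  obtain m where m: "m \<in> Hom K X X" "cmp K m (cmp K v u) = idm K X" using is_isoE[OF vu] by metis
  obtain n where n: "n \<in> Hom K Y Y" "cmp K (cmp K u v) n = idm K Y" using is_isoE[OF uv] by metis
  have left: "cmp K (cmp K m v) u = idm K X" using m comp_assoc[of X Y X X u v m] ob u v by simp
  have right: "cmp K u (cmp K v n) = idm K Y" using n comp_assoc[of Y Y X Y n v u] ob u v by simp
  have mv: "cmp K m v \<in> Hom K Y X" and vn: "cmp K v n \<in> Hom K Y X"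
    using comp_hom[of Y X X v m] comp_hom[of Y Y X n v] ob m n v by auto
  have "cmp K m v = cmp K (cmp K (cmp K m v) u) (cmp K v n)"
    using comp_assoc[of Y X Y X "cmp K v n" u "cmp K m v"] right ob mv vn u by simp
  also have "\<dots> = cmp K v n" using left vn ob by simp
  finally show ?thesis unfolding is_iso_def using left right u vn by metis
qed

lemma chain_mapD:
  assumes "chain_map K (A, f, B, g, C) (A', f', B', g', C') a b c"
  shows "A \<in> Ob K" "B \<in> Ob K" "C \<in> Ob K" "A' \<in> Ob K" "B' \<in> Ob K" "C' \<in> Ob K"
    "f \<in> Hom K A B" "g \<in> Hom K B C" "f' \<in> Hom K A' B'" "g' \<in> Hom K B' C'"
    "a \<in> Hom K A A'" "b \<in> Hom K B B'" "c \<in> Hom K C C'"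
    "cmp K b f = cmp K f' a" "cmp K c g = cmp K g' b"
  using assms unfolding chain_map_def by auto

lemma chain_map_comp:
  assumes c1: "chain_map K (A, f, B, g, C) (A', f', B', g', C') a b c"
    and c2: "chain_map K (A', f', B', g', C') (A'', f'', B'', g'', C'') a' b' c'"
  shows "chain_map K (A, f, B, g, C) (A'', f'', B'', g'', C'') (cmp K a' a) (cmp K b' b) (cmp K c' c)"
proof -
  note h1 = chain_mapD[OF c1] and h2 = chain_mapD[OF c2]
  have "cmp K (cmp K b' b) f = cmp K b' (cmp K f' a)" using h1 h2 comp_assoc[of A B B' B'' f b b'] by simp
  also have "\<dots> = cmp K f'' (cmp K a' a)"
    using h1 h2 comp_assoc[of A A' B' B'' a f' b'] comp_assoc[of A A' A'' B'' a a' f''] by simp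
  finally have 1: "cmp K (cmp K b' b) f = cmp K f'' (cmp K a' a)" .
  have "cmp K (cmp K c' c) g = cmp K c' (cmp K g' b)" using h1 h2 comp_assoc[of B C C' C'' g c c'] by simp
  also have "\<dots> = cmp K g'' (cmp K b' b)"
    using h1 h2 comp_assoc[of B B' C' C'' b g' c'] comp_assoc[of B B' B'' C'' b b' g''] by simp
  finally have 2: "cmp K (cmp K c' c) g = cmp K g'' (cmp K b' b)" .
  show ?thesis
    unfolding chain_map_def
    using h1 h2 1 2 comp_hom[of A A' A'' a a'] comp_hom[of B B' B'' b b'] comp_hom[of C C' C'' c c']
    by simp
qed

lemma seq_iso_inverse:
  assumes "seq_iso K (A, f, B, g, C) (A', f', B', g', C')"
  obtains a b c a' b' c' where "chain_map K (A, f, B, g, C) (A', f', B', g', C') a b c"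
    "chain_map K (A', f', B', g', C') (A, f, B, g, C) a' b' c'"
    "cmp K a' a = idm K A" "cmp K a a' = idm K A'" "cmp K b b' = idm K B'"
    "cmp K c' c = idm K C" "cmp K c c' = idm K C'"
proof -
  obtain a b c where ch: "chain_map K (A, f, B, g, C) (A', f', B', g', C') a b c"
    and "is_iso K A A' a" "is_iso K B B' b" "is_iso K C C' c"
    using assms unfolding seq_iso_def by auto
  then obtain a' b' c' where
    a': "a' \<in> Hom K A' A" "cmp K a' a = idm K A" "cmp K a a' = idm K A'" and
    b': "b' \<in> Hom K B' B" "cmp K b' b = idm K B" "cmp K b b' = idm K B'" and
    c': "c' \<in> Hom K C' C" "cmp K c' c = idm K C" "cmp K c c' = idm K C'"
    by (metis is_isoE)
  note h = chain_mapD[OF ch]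
  have "cmp K b' f' = cmp K b' (cmp K (cmp K b f) a')"
    using comp_assoc[of A' A A' B' a' a f'] a' h by simp
  then have f_comm: "cmp K b' f' = cmp K f a'"
    using comp_assoc[of A' A B B' a' f b] comp_assoc[of A' B B' B "cmp K f a'" b b']
      comp_hom[of A' A B a' f] a' b' h by simp
  have "cmp K c' g' = cmp K c' (cmp K (cmp K c g) b')"
    using comp_assoc[of B' B B' C' b' b g'] b' h by simp
  then have g_comm: "cmp K c' g' = cmp K g b'"
    using comp_assoc[of B' B C C' b' g c] comp_assoc[of B' C C' C "cmp K g b'" c c']
      comp_hom[of B' B C b' g] b' c' h by simp
  have "chain_map K (A', f', B', g', C') (A, f, B, g, C) a' b' c'"
    unfolding chain_map_def using h a' b' c' f_comm g_comm by simp
  then show ?thesis using that ch a' b' c' by blast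
qed

lemma is_iso_id_hadd_square_zero:
  assumes B: "B \<in> Ob K" and n: "n \<in> Hom K B B" and nn: "cmp K n n = hzero K B B"
  shows "is_iso K B B (hadd K B B (idm K B) n)"
proof -
  define p where "p = hadd K B B (idm K B) n"
  define q where "q = hadd K B B (idm K B) (hneg K B B n)"
  have i: "idm K B \<in> Hom K B B" and mn: "hneg K B B n \<in> Hom K B B" using hneg_hom B n by auto
  have p: "p \<in> Hom K B B" and q: "q \<in> Hom K B B"
    unfolding p_def q_def using hadd_hom B i n mn by auto
  have pq_sum: "hadd K B B p (hneg K B B n) = idm K B"
    unfolding p_def using hadd_assoc[OF B B i n mn] i n B by simp
  have pn: "cmp K p n = n" and np: "cmp K n p = n"
    unfolding p_def
    using comp_distrib_right[of B B B n "idm K B" n] comp_distrib_left[of B B B "idm K B" n n] i n B nn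
    by simp_all
  have "cmp K p q = idm K B"
    unfolding q_def
    using comp_distrib_left[of B B B "idm K B" "hneg K B B n" p] comp_hneg_right[of B B B n p] p i mn n B pn pq_sum
    by simp
  moreover have "cmp K q p = idm K B"
    unfolding q_def
    using comp_distrib_right[of B B B p "idm K B" "hneg K B B n"] comp_hneg_left[of B B B p n] p i mn n B np pq_sum
    by simp
  ultimately show ?thesis unfolding is_iso_def p_def[symmetric] using p q by blast
qed

text \<open>p - 1 kills f and is killed by g, so it factors both as f h and as k g; hence
  (p - 1)^2 = k g f h = 0.\<close>
lemma weak_kc_pair_endo_is_iso:
  assumes w: "weak_kc_pair K (A, f, B, g, C)" and p: "p \<in> Hom K B B"
    and pf: "cmp K p f = f" and gp: "cmp K g p = g"
  shows "is_iso K B B p"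
proof -
  note W = weak_kc_pairD[OF w]
  have B: "B \<in> Ob K" using W by simp
  have i: "idm K B \<in> Hom K B B" and mi: "hneg K B B (idm K B) \<in> Hom K B B"
    using hneg_hom B by auto
  define n where "n = hadd K B B p (hneg K B B (idm K B))"
  have n: "n \<in> Hom K B B" unfolding n_def using hadd_hom[OF B B p mi] .
  have "cmp K g n = hzero K B C"
    unfolding n_def using comp_distrib_left[of B B C p "hneg K B B (idm K B)" g]
      comp_hneg_right[of B B C "idm K B" g] gp W p mi by simp
  then obtain h where h: "h \<in> Hom K B A" "n = cmp K f h" using W(7)[OF B n] by blast
  have "cmp K n f = hzero K A B"
    unfolding n_def using comp_distrib_right[of A B B f p "hneg K B B (idm K B)"]
      comp_hneg_left[of A B B f "idm K B"] pf W p mi by simp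
  then obtain k where k: "k \<in> Hom K C B" "n = cmp K k g" using W(8)[OF B n] by blast
  have "cmp K n n = cmp K k (cmp K (cmp K g f) h)"
    using k h comp_assoc[of B A B B h f n] comp_assoc[of B B C B "cmp K f h" g k]
      comp_assoc[of B A B C h f g] W comp_hom[of B A B h f] by simp
  then have nn: "cmp K n n = hzero K B B" using W h k by simp
  have "p = hadd K B B (idm K B) n"
    unfolding n_def using hadd_comm[OF B B i] hadd_assoc[OF B B p mi i] hadd_hom[OF B B p mi] p i mi B
    by simp
  then show ?thesis using is_iso_id_hadd_square_zero[OF B n nn] by simp
qed

lemma weak_kc_pair_transfer_retract:
  assumes w: "weak_kc_pair K (A, f, B, g, C)"
    and c1: "chain_map K (A, f, B, g, C) (A', f', B', g', C') a b c"
    and c2: "chain_map K (A', f', B', g', C') (A, f, B, g, C) a' b' c'"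
    and bb: "cmp K b b' = idm K B'"
  shows "weak_kc_pair K (A', f', B', g', C')"
proof -
  note W = weak_kc_pairD[OF w]
  note h1 = chain_mapD[OF c1] and h2 = chain_mapD[OF c2]
  have retr_into: "x = cmp K b (cmp K b' x)" if X: "X \<in> Ob K" and x: "x \<in> Hom K X B'" for X x
    using comp_assoc[of X B' B B' x b' b] bb h1 h2 X x by simp
  have retr_from: "x = cmp K (cmp K x b) b'" if X: "X \<in> Ob K" and x: "x \<in> Hom K B' X" for X x
    using comp_assoc[of B' B B' X b' b x] bb h1 h2 X x by simp
  show ?thesis
  proof (rule weak_kc_pairI)
    show ob: "A' \<in> Ob K" "B' \<in> Ob K" "C' \<in> Ob K" "f' \<in> Hom K A' B'" "g' \<in> Hom K B' C'"
      using h1 by auto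
    have "cmp K g' f' = cmp K (cmp K g' b) (cmp K b' f')"
      using retr_into[of A' f'] comp_assoc[of A' B B' C' "cmp K b' f'" b g'] h1 h2
        comp_hom[of A' B' B f' b'] ob by simp
    also have "\<dots> = cmp K c (cmp K (cmp K g f) a')"
      using comp_assoc[of A' B C C' "cmp K f a'" g c] comp_assoc[of A' A B C a' f g] h1 h2
        comp_hom[of A' A B a' f] by simp
    finally show "cmp K g' f' = hzero K A' C'" using W h1 h2 by auto
  next
    fix X x assume X: "X \<in> Ob K" and x: "x \<in> Hom K X B'" and gx: "cmp K g' x = hzero K X C'"
    have bx: "cmp K b' x \<in> Hom K X B" using comp_hom[of X B' B x b'] X x h2 by simp
    have "cmp K g (cmp K b' x) = cmp K c' (cmp K g' x)"
      using comp_assoc[of X B' B C x b' g] comp_assoc[of X B' C' C x g' c'] h2 X x by simp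
    then obtain y where y: "y \<in> Hom K X A" "cmp K b' x = cmp K f y"
      using W(7)[OF X bx] gx h2 X by auto
    have "x = cmp K f' (cmp K a y)"
      using retr_into[OF X x] y comp_assoc[of X A B B' y f b] comp_assoc[of X A A' B' y a f'] h1 X
      by simp
    then show "\<exists>y\<in>Hom K X A'. x = cmp K f' y" using comp_hom[of X A A' y a] h1 y X by blast
  next
    fix X x assume X: "X \<in> Ob K" and x: "x \<in> Hom K B' X" and xf: "cmp K x f' = hzero K A' X"
    have xb: "cmp K x b \<in> Hom K B X" using comp_hom[of B B' X b x] X x h1 by simp
    have "cmp K (cmp K x b) f = cmp K (cmp K x f') a"
      using comp_assoc[of A B B' X f b x] comp_assoc[of A A' B' X a f' x] h1 X x by simp
    then obtain z where z: "z \<in> Hom K C X" "cmp K x b = cmp K z g"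
      using W(8)[OF X xb] xf h1 X by auto
    have "x = cmp K (cmp K z c') g'"
      using retr_from[OF X x] z comp_assoc[of B' B C X b' g z] comp_assoc[of B' C' C X g' c' z] h2 X
      by simp
    then show "\<exists>y\<in>Hom K C' X. x = cmp K y g'" using comp_hom[of C' C X c' z] h2 z X by blast
  qed
qed

lemma direct_sum_weak_kernel:
  assumes w1: "weak_kc_pair K (A, f, B, g, C)" and w2: "weak_kc_pair K (A', f', B', g', C')"
    and bA: "biproduct K A A' SA ia1 ia2 qa1 qa2" and bB: "biproduct K B B' SB ib1 ib2 qb1 qb2"
    and bC: "biproduct K C C' SC ic1 ic2 qc1 qc2"
    and F: "F = hadd K SA SB (cmp K ib1 (cmp K f qa1)) (cmp K ib2 (cmp K f' qa2))"
    and G: "G = hadd K SB SC (cmp K ic1 (cmp K g qb1)) (cmp K ic2 (cmp K g' qb2))"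
    and X: "X \<in> Ob K" and x: "x \<in> Hom K X SB" and Gx: "cmp K G x = hzero K X SC"
  shows "\<exists>y\<in>Hom K X SA. x = cmp K F y"
proof -
  note W1 = weak_kc_pairD[OF w1] and W2 = weak_kc_pairD[OF w2]
  note BA = biproductD[OF bA] and BB = biproductD[OF bB] and BC = biproductD[OF bC]
  note dF = biproduct_diag[OF bA bB W1(1) W2(1) W1(2) W2(2) W1(4) W2(4) F]
  note dG = biproduct_diag[OF bB bC W1(2) W2(2) W1(3) W2(3) W1(5) W2(5) G]
  have x1: "cmp K qb1 x \<in> Hom K X B" and x2: "cmp K qb2 x \<in> Hom K X B'"
    using comp_hom[of X SB B x qb1] comp_hom[of X SB B' x qb2] BB X x W1 W2 by auto
  have "cmp K g (cmp K qb1 x) = cmp K qc1 (cmp K G x)"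
    using comp_assoc[of X SB B C x qb1 g] comp_assoc[of X SB SC C x G qc1] dG BB BC X x W1 by simp
  then obtain y1 where y1: "y1 \<in> Hom K X A" "cmp K qb1 x = cmp K f y1"
    using W1(7)[OF X x1] Gx BC X W1 by auto
  have "cmp K g' (cmp K qb2 x) = cmp K qc2 (cmp K G x)"
    using comp_assoc[of X SB B' C' x qb2 g'] comp_assoc[of X SB SC C' x G qc2] dG BB BC X x W2 by simp
  then obtain y2 where y2: "y2 \<in> Hom K X A'" "cmp K qb2 x = cmp K f' y2"
    using W2(7)[OF X x2] Gx BC X W2 by auto
  define y where "y = hadd K X SA (cmp K ia1 y1) (cmp K ia2 y2)"
  note py = biproduct_pair[OF bA W1(1) W2(1) X y1(1) y2(1), folded y_def]
  have Fy: "cmp K F y \<in> Hom K X SB" using comp_hom[of X SA SB y F] py dF BA BB X by simp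
  have "cmp K F y = x"
  proof (rule biproduct_hom_into_eqI[OF bB W1(2) W2(2) X Fy x])
    show "cmp K qb1 (cmp K F y) = cmp K qb1 x"
      using comp_assoc[of X SA SB B y F qb1] comp_assoc[of X SA A B y qa1 f] dF py y1 BA BB X W1
      by simp
    show "cmp K qb2 (cmp K F y) = cmp K qb2 x"
      using comp_assoc[of X SA SB B' y F qb2] comp_assoc[of X SA A' B' y qa2 f'] dF py y2 BA BB X W2
      by simp
  qed
  then show ?thesis using py by metis
qed

lemma direct_sum_weak_cokernel:
  assumes w1: "weak_kc_pair K (A, f, B, g, C)" and w2: "weak_kc_pair K (A', f', B', g', C')"
    and bA: "biproduct K A A' SA ia1 ia2 qa1 qa2" and bB: "biproduct K B B' SB ib1 ib2 qb1 qb2"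
    and bC: "biproduct K C C' SC ic1 ic2 qc1 qc2"
    and F: "F = hadd K SA SB (cmp K ib1 (cmp K f qa1)) (cmp K ib2 (cmp K f' qa2))"
    and G: "G = hadd K SB SC (cmp K ic1 (cmp K g qb1)) (cmp K ic2 (cmp K g' qb2))"
    and X: "X \<in> Ob K" and x: "x \<in> Hom K SB X" and xF: "cmp K x F = hzero K SA X"
  shows "\<exists>z\<in>Hom K SC X. x = cmp K z G"
proof -
  note W1 = weak_kc_pairD[OF w1] and W2 = weak_kc_pairD[OF w2]
  note BA = biproductD[OF bA] and BB = biproductD[OF bB] and BC = biproductD[OF bC]
  note dF = biproduct_diag[OF bA bB W1(1) W2(1) W1(2) W2(2) W1(4) W2(4) F]
  note dG = biproduct_diag[OF bB bC W1(2) W2(2) W1(3) W2(3) W1(5) W2(5) G]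
  have x1: "cmp K x ib1 \<in> Hom K B X" and x2: "cmp K x ib2 \<in> Hom K B' X"
    using comp_hom[of B SB X ib1 x] comp_hom[of B' SB X ib2 x] BB X x W1 W2 by auto
  have "cmp K (cmp K x ib1) f = cmp K (cmp K x F) ia1"
    using comp_assoc[of A B SB X f ib1 x] comp_assoc[of A SA SB X ia1 F x] dF BB BA X x W1 by simp
  then obtain z1 where z1: "z1 \<in> Hom K C X" "cmp K x ib1 = cmp K z1 g"
    using W1(8)[OF X x1] xF BA X W1 by auto
  have "cmp K (cmp K x ib2) f' = cmp K (cmp K x F) ia2"
    using comp_assoc[of A' B' SB X f' ib2 x] comp_assoc[of A' SA SB X ia2 F x] dF BB BA X x W2 by simp
  then obtain z2 where z2: "z2 \<in> Hom K C' X" "cmp K x ib2 = cmp K z2 g'"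
    using W2(8)[OF X x2] xF BA X W2 by auto
  define z where "z = hadd K SC X (cmp K z1 qc1) (cmp K z2 qc2)"
  note pz = biproduct_copair[OF bC W1(3) W2(3) X z1(1) z2(1), folded z_def]
  have zG: "cmp K z G \<in> Hom K SB X" using comp_hom[of SB SC X G z] pz dG BB BC X by simp
  have "cmp K z G = x"
  proof (rule biproduct_hom_from_eqI[OF bB W1(2) W2(2) X zG x])
    show "cmp K (cmp K z G) ib1 = cmp K x ib1"
      using comp_assoc[of B SB SC X ib1 G z] comp_assoc[of B C SC X g ic1 z] dG pz z1 BC BB X W1
      by simp
    show "cmp K (cmp K z G) ib2 = cmp K x ib2"
      using comp_assoc[of B' SB SC X ib2 G z] comp_assoc[of B' C' SC X g' ic2 z] dG pz z2 BC BB X W2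
      by simp
  qed
  then show ?thesis using pz by metis
qed

lemma weak_kc_pair_direct_sum:
  assumes w1: "weak_kc_pair K (A, f, B, g, C)" and w2: "weak_kc_pair K (A', f', B', g', C')"
    and bA: "biproduct K A A' SA ia1 ia2 qa1 qa2" and bB: "biproduct K B B' SB ib1 ib2 qb1 qb2"
    and bC: "biproduct K C C' SC ic1 ic2 qc1 qc2"
    and F: "F = hadd K SA SB (cmp K ib1 (cmp K f qa1)) (cmp K ib2 (cmp K f' qa2))"
    and G: "G = hadd K SB SC (cmp K ic1 (cmp K g qb1)) (cmp K ic2 (cmp K g' qb2))"
  shows "weak_kc_pair K (SA, F, SB, G, SC)"
proof -
  note W1 = weak_kc_pairD[OF w1] and W2 = weak_kc_pairD[OF w2]
  note BA = biproductD[OF bA] and BB = biproductD[OF bB] and BC = biproductD[OF bC]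
  note dF = biproduct_diag[OF bA bB W1(1) W2(1) W1(2) W2(2) W1(4) W2(4) F]
  note dG = biproduct_diag[OF bB bC W1(2) W2(2) W1(3) W2(3) W1(5) W2(5) G]
  have GF: "cmp K G F \<in> Hom K SA SC" using comp_hom[of SA SB SC F G] dF dG BA BB BC by simp
  have "cmp K G F = hzero K SA SC"
  proof (rule biproduct_hom_from_eqI[OF bA W1(1) W2(1) BC(1) GF])
    have "cmp K (cmp K G F) ia1 = cmp K (cmp K ic1 g) f"
      using comp_assoc[of A SA SB SC ia1 F G] comp_assoc[of A B SB SC f ib1 G] dF dG BA BB BC W1 W2
      by simp
    then show "cmp K (cmp K G F) ia1 = cmp K (hzero K SA SC) ia1"
      using comp_assoc[of A B C SC f g ic1] BA BC W1 by simp
    have "cmp K (cmp K G F) ia2 = cmp K (cmp K ic2 g') f'"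
      using comp_assoc[of A' SA SB SC ia2 F G] comp_assoc[of A' B' SB SC f' ib2 G] dF dG BA BB BC W1 W2
      by simp
    then show "cmp K (cmp K G F) ia2 = cmp K (hzero K SA SC) ia2"
      using comp_assoc[of A' B' C' SC f' g' ic2] BA BC W2 by simp
  qed (use BA BC in simp)
  then show ?thesis
    using weak_kc_pairI direct_sum_weak_kernel[OF assms] direct_sum_weak_cokernel[OF assms]
      dF dG BA BB BC by blast
qed

lemma direct_sum_chain_map_from:
  assumes bA: "biproduct K A A' SA ia1 ia2 qa1 qa2" and bB: "biproduct K B B' SB ib1 ib2 qb1 qb2"
    and bC: "biproduct K C C' SC ic1 ic2 qc1 qc2"
    and F: "F = hadd K SA SB (cmp K ib1 (cmp K f qa1)) (cmp K ib2 (cmp K f' qa2))"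
    and G: "G = hadd K SB SC (cmp K ic1 (cmp K g qb1)) (cmp K ic2 (cmp K g' qb2))"
    and c1: "chain_map K (A, f, B, g, C) (SA, fT, BT, gT, SC) ia1 b1 ic1"
    and c2: "chain_map K (A', f', B', g', C') (SA, fT, BT, gT, SC) ia2 b2 ic2"
  shows "\<exists>u. chain_map K (SA, F, SB, G, SC) (SA, fT, BT, gT, SC) (idm K SA) u (idm K SC)"
proof -
  note h1 = chain_mapD[OF c1] and h2 = chain_mapD[OF c2]
  note BA = biproductD[OF bA] and BB = biproductD[OF bB] and BC = biproductD[OF bC]
  note dF = biproduct_diag[OF bA bB h1(1) h2(1) h1(2) h2(2) h1(7) h2(7) F]
  note dG = biproduct_diag[OF bB bC h1(2) h2(2) h1(3) h2(3) h1(8) h2(8) G]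
  define u where "u = hadd K SB BT (cmp K b1 qb1) (cmp K b2 qb2)"
  note cu = biproduct_copair[OF bB h1(2) h2(2) h1(5) h1(12) h2(12), folded u_def]
  have uF: "cmp K u F \<in> Hom K SA BT" using comp_hom[of SA SB BT F u] cu dF BA BB h1 by simp
  have "cmp K u F = fT"
  proof (rule biproduct_hom_from_eqI[OF bA h1(1) h2(1) h1(5) uF h1(9)])
    show "cmp K (cmp K u F) ia1 = cmp K fT ia1"
      using comp_assoc[of A SA SB BT ia1 F u] comp_assoc[of A B SB BT f ib1 u] dF cu h1 BA BB by simp
    show "cmp K (cmp K u F) ia2 = cmp K fT ia2"
      using comp_assoc[of A' SA SB BT ia2 F u] comp_assoc[of A' B' SB BT f' ib2 u] dF cu h2 BA BB by simp
  qed
  moreover have gu: "cmp K gT u \<in> Hom K SB SC" using comp_hom[of SB BT SC u gT] cu h1 BB by simp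
  have "cmp K gT u = G"
  proof (rule biproduct_hom_from_eqI[OF bB h1(2) h2(2) h1(6) gu dG(1)])
    show "cmp K (cmp K gT u) ib1 = cmp K G ib1"
      using comp_assoc[of B SB BT SC ib1 u gT] dG cu h1 BB by simp
    show "cmp K (cmp K gT u) ib2 = cmp K G ib2"
      using comp_assoc[of B' SB BT SC ib2 u gT] dG cu h1 h2 BB by simp
  qed
  ultimately have "chain_map K (SA, F, SB, G, SC) (SA, fT, BT, gT, SC) (idm K SA) u (idm K SC)"
    unfolding chain_map_def using cu h1 dF dG BA BB BC by simp
  then show ?thesis ..
qed

lemma direct_sum_chain_map_into:
  assumes bA: "biproduct K A A' SA ia1 ia2 qa1 qa2" and bB: "biproduct K B B' SB ib1 ib2 qb1 qb2"
    and bC: "biproduct K C C' SC ic1 ic2 qc1 qc2"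
    and F: "F = hadd K SA SB (cmp K ib1 (cmp K f qa1)) (cmp K ib2 (cmp K f' qa2))"
    and G: "G = hadd K SB SC (cmp K ic1 (cmp K g qb1)) (cmp K ic2 (cmp K g' qb2))"
    and c1: "chain_map K (SA, fT, BT, gT, SC) (A, f, B, g, C) qa1 q1 qc1"
    and c2: "chain_map K (SA, fT, BT, gT, SC) (A', f', B', g', C') qa2 q2 qc2"
  shows "\<exists>v. chain_map K (SA, fT, BT, gT, SC) (SA, F, SB, G, SC) (idm K SA) v (idm K SC)"
proof -
  note h1 = chain_mapD[OF c1] and h2 = chain_mapD[OF c2]
  note BA = biproductD[OF bA] and BB = biproductD[OF bB] and BC = biproductD[OF bC]
  note dF = biproduct_diag[OF bA bB h1(4) h2(4) h1(5) h2(5) h1(9) h2(9) F]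
  note dG = biproduct_diag[OF bB bC h1(5) h2(5) h1(6) h2(6) h1(10) h2(10) G]
  define v where "v = hadd K BT SB (cmp K ib1 q1) (cmp K ib2 q2)"
  note pv = biproduct_pair[OF bB h1(5) h2(5) h1(2) h1(12) h2(12), folded v_def]
  have vf: "cmp K v fT \<in> Hom K SA SB" using comp_hom[of SA BT SB fT v] pv h1 BB by simp
  have "cmp K v fT = F"
  proof (rule biproduct_hom_into_eqI[OF bB h1(5) h2(5) h1(1) vf dF(1)])
    show "cmp K qb1 (cmp K v fT) = cmp K qb1 F"
      using comp_assoc[of SA BT SB B fT v qb1] dF pv h1 BB by simp
    show "cmp K qb2 (cmp K v fT) = cmp K qb2 F"
      using comp_assoc[of SA BT SB B' fT v qb2] dF pv h1 h2 BB by simp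
  qed
  moreover have Gv: "cmp K G v \<in> Hom K BT SC" using comp_hom[of BT SB SC v G] pv dG h1 BB BC by simp
  have "cmp K G v = gT"
  proof (rule biproduct_hom_into_eqI[OF bC h1(6) h2(6) h1(2) Gv h1(8)])
    show "cmp K qc1 (cmp K G v) = cmp K qc1 gT"
      using comp_assoc[of BT SB SC C v G qc1] comp_assoc[of BT SB B C v qb1 g] dG pv h1 BB BC by simp
    show "cmp K qc2 (cmp K G v) = cmp K qc2 gT"
      using comp_assoc[of BT SB SC C' v G qc2] comp_assoc[of BT SB B' C' v qb2 g'] dG pv h1 h2 BB BC
      by simp
  qed
  ultimately have "chain_map K (SA, fT, BT, gT, SC) (SA, F, SB, G, SC) (idm K SA) v (idm K SC)"
    unfolding chain_map_def using pv h1 dF dG BA BB BC by simp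
  then show ?thesis ..
qed

text \<open>A map [-v u] out of A' \<oplus> B kills [a; i] exactly when u i = v a, so the cokernel property of
  the mapping cocone is the universal property of the square.\<close>
lemma is_pushout_if_cokernel:
  assumes bp: "biproduct K A' B S j1 j2 p1 p2"
    and ob: "A \<in> Ob K" "A' \<in> Ob K" "B \<in> Ob K" "P \<in> Ob K"
    and hom: "i \<in> Hom K A B" "a \<in> Hom K A A'" "f \<in> Hom K A' P" "b \<in> Hom K B P"
    and comm: "cmp K b i = cmp K f a"
    and cok: "is_cokernel K A S P (hadd K A S (cmp K j1 a) (cmp K j2 i))
                (hadd K S P (cmp K (hneg K A' P f) p1) (cmp K b p2))"
  shows "is_pushout K A B A' P i a f b"
  unfolding is_pushout_def
proof (intro conjI ballI impI)
  fix X u v assume X: "X \<in> Ob K" and u: "u \<in> Hom K B X" and v: "v \<in> Hom K A' X"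
    and uv: "cmp K u i = cmp K v a"
  note BP = biproductD[OF bp]
  define F where "F = hadd K A S (cmp K j1 a) (cmp K j2 i)"
  define G where "G = hadd K S P (cmp K (hneg K A' P f) p1) (cmp K b p2)"
  note cG = biproduct_copair[OF bp ob(2,3,4) hneg_hom[OF ob(2,4) hom(3)] hom(4), folded G_def]
  define x where "x = hadd K S X (cmp K (hneg K A' X v) p1) (cmp K u p2)"
  note cx = biproduct_copair[OF bp ob(2,3) X hneg_hom[OF ob(2) X v] u, folded x_def]
  have "cmp K x F = hadd K A X (cmp K (cmp K x j1) a) (cmp K (cmp K x j2) i)"
    unfolding F_def
    using comp_distrib_left[of A S X "cmp K j1 a" "cmp K j2 i" x] comp_hom[of A A' S a j1]
      comp_hom[of A B S i j2] comp_assoc[of A A' S X a j1 x] comp_assoc[of A B S X i j2 x]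
      cx BP ob hom X by simp
  then have xF: "cmp K x F = hzero K A X"
    using comp_hneg_left[of A A' X a v] uv cx ob hom v X comp_hom[of A A' X a v] by simp
  obtain w where w: "w \<in> Hom K P X" "cmp K w G = x"
    and w_unique: "\<And>w'. \<lbrakk>w' \<in> Hom K P X; cmp K w' G = x\<rbrakk> \<Longrightarrow> w' = w"
    using cok[folded F_def G_def] X cx(1) xF unfolding is_cokernel_def by metis
  have factor_iff: "cmp K w' b = u \<and> cmp K w' f = v \<longleftrightarrow> cmp K w' G = x"
    if w': "w' \<in> Hom K P X" for w'
  proof -
    have wG: "cmp K w' G \<in> Hom K S X" using comp_hom[of S P X G w'] cG w' BP ob X by simp
    have wf: "cmp K w' f \<in> Hom K A' X" using comp_hom[of A' P X f w'] w' ob hom X by simp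
    have e1: "cmp K (cmp K w' G) j1 = hneg K A' X (cmp K w' f)"
      using comp_assoc[of A' S P X j1 G w'] comp_hneg_right[of A' P X f w'] cG w' BP ob hom X by simp
    have e2: "cmp K (cmp K w' G) j2 = cmp K w' b"
      using comp_assoc[of B S P X j2 G w'] cG w' BP ob X by simp
    show ?thesis
      using biproduct_hom_from_eqI[OF bp ob(2,3) X wG cx(1)] e1 e2 cx
        hneg_hneg[OF ob(2) X wf] hneg_hneg[OF ob(2) X v] by metis
  qed
  show "\<exists>!w. w \<in> Hom K P X \<and> cmp K w b = u \<and> cmp K w f = v"
    using factor_iff w w_unique by blast
qed (use assms in auto)

lemma is_pullback_if_kernel:
  assumes bp: "biproduct K C' B S j1 j2 p1 p2"
    and ob: "C \<in> Ob K" "C' \<in> Ob K" "B \<in> Ob K" "P \<in> Ob K"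
    and hom: "d \<in> Hom K B C" "c \<in> Hom K C' C" "g \<in> Hom K P C'" "b \<in> Hom K P B"
    and comm: "cmp K d b = cmp K c g"
    and ker: "is_kernel K P S C (hadd K P S (cmp K j1 (hneg K P C' g)) (cmp K j2 b))
                (hadd K S C (cmp K c p1) (cmp K d p2))"
  shows "is_pullback K B C C' P d c g b"
  unfolding is_pullback_def
proof (intro conjI ballI impI)
  fix X u v assume X: "X \<in> Ob K" and u: "u \<in> Hom K X B" and v: "v \<in> Hom K X C'"
    and uv: "cmp K d u = cmp K c v"
  note BP = biproductD[OF bp]
  define F where "F = hadd K P S (cmp K j1 (hneg K P C' g)) (cmp K j2 b)"
  define G where "G = hadd K S C (cmp K c p1) (cmp K d p2)"
  note pF = biproduct_pair[OF bp ob(2,3,4) hneg_hom[OF ob(4,2) hom(3)] hom(4), folded F_def]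
  define x where "x = hadd K X S (cmp K j1 (hneg K X C' v)) (cmp K j2 u)"
  note px = biproduct_pair[OF bp ob(2,3) X hneg_hom[OF X ob(2) v] u, folded x_def]
  have "cmp K G x = hadd K X C (cmp K c (cmp K p1 x)) (cmp K d (cmp K p2 x))"
    unfolding G_def
    using comp_distrib_right[of X S C x "cmp K c p1" "cmp K d p2"] comp_hom[of S C' C p1 c]
      comp_hom[of S B C p2 d] comp_assoc[of X S C' C x p1 c] comp_assoc[of X S B C x p2 d]
      px BP ob hom X by simp
  then have Gx: "cmp K G x = hzero K X C"
    using comp_hneg_right[of X C' C v c] uv px ob hom v X comp_hom[of X C' C v c] by simp
  obtain w where w: "w \<in> Hom K X P" "cmp K F w = x"
    and w_unique: "\<And>w'. \<lbrakk>w' \<in> Hom K X P; cmp K F w' = x\<rbrakk> \<Longrightarrow> w' = w"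
    using ker[folded F_def G_def] X px(1) Gx unfolding is_kernel_def by metis
  have factor_iff: "cmp K b w' = u \<and> cmp K g w' = v \<longleftrightarrow> cmp K F w' = x"
    if w': "w' \<in> Hom K X P" for w'
  proof -
    have Fw: "cmp K F w' \<in> Hom K X S" using comp_hom[of X P S w' F] pF w' BP ob X by simp
    have gw: "cmp K g w' \<in> Hom K X C'" using comp_hom[of X P C' w' g] w' ob hom X by simp
    have e1: "cmp K p1 (cmp K F w') = hneg K X C' (cmp K g w')"
      using comp_assoc[of X P S C' w' F p1] comp_hneg_left[of X P C' w' g] pF w' BP ob hom X by simp
    have e2: "cmp K p2 (cmp K F w') = cmp K b w'"
      using comp_assoc[of X P S B w' F p2] pF w' BP ob X by simp
    show ?thesis
      using biproduct_hom_into_eqI[OF bp ob(2,3) X Fw px(1)] e1 e2 px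
        hneg_hneg[OF X ob(2) gw] hneg_hneg[OF X ob(2) v] by metis
  qed
  show "\<exists>!w. w \<in> Hom K X P \<and> cmp K b w = u \<and> cmp K g w = v"
    using factor_iff w w_unique by blast
qed (use assms in auto)

end

section \<open>Weakly extriangulated categories\<close>

locale weakly_extriangulated_cat =
  fixes K :: "('o,'m) precat" and E :: "('o,'m,'e) bifun" and s :: "('o,'m,'e) realiz"
  assumes weakly_extriangulated: "weakly_extriangulated K E s"
begin

lemma additive_category: "additive_category K"
  and additive_bifunctor: "additive_bifunctor K E"
  and exact_realization: "exact_realization K E s"
  and EA2: "EA2 K E s"
  and EA2op: "EA2op K E s"
  using weakly_extriangulated unfolding weakly_extriangulated_def by blast+

sublocale preadditive_cat K
  using additive_category unfolding additive_category_def by unfold_locales blast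

lemmas bifunctor_axioms = additive_bifunctor[unfolded additive_bifunctor_def]

lemma ext_group: "\<lbrakk>C \<in> Ob K; A \<in> Ob K\<rbrakk> \<Longrightarrow> group (ext_grp E C A)"
  using bifunctor_axioms[THEN conjunct1] comm_group.axioms(2) by blast

lemma Ezero_closed: "\<lbrakk>C \<in> Ob K; A \<in> Ob K\<rbrakk> \<Longrightarrow> Ezero E C A \<in> Ecar E C A"
  using group.is_monoid[OF ext_group, THEN monoid.one_closed, of C A] by (simp add: ext_grp_def)

lemma Eadd_closed:
  "\<lbrakk>C \<in> Ob K; A \<in> Ob K; x \<in> Ecar E C A; y \<in> Ecar E C A\<rbrakk> \<Longrightarrow> Eadd E C A x y \<in> Ecar E C A"
  using group.is_monoid[OF ext_group, THEN monoid.m_closed, of C A] by (simp add: ext_grp_def)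

lemma Eadd_zero_left [simp]:
  "\<lbrakk>C \<in> Ob K; A \<in> Ob K; x \<in> Ecar E C A\<rbrakk> \<Longrightarrow> Eadd E C A (Ezero E C A) x = x"
  using group.is_monoid[OF ext_group, THEN monoid.l_one, of C A] by (simp add: ext_grp_def)

lemma Eadd_zero_right [simp]:
  "\<lbrakk>C \<in> Ob K; A \<in> Ob K; x \<in> Ecar E C A\<rbrakk> \<Longrightarrow> Eadd E C A x (Ezero E C A) = x"
  using group.is_monoid[OF ext_group, THEN monoid.r_one, of C A] by (simp add: ext_grp_def)

lemma Eadd_idem_eq_zero:
  "\<lbrakk>C \<in> Ob K; A \<in> Ob K; x \<in> Ecar E C A; Eadd E C A x x = x\<rbrakk> \<Longrightarrow> x = Ezero E C A"
  using group.l_cancel_one[OF ext_group, of C A x x] by (simp add: ext_grp_def)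

lemma Emap_closed:
  "\<lbrakk>C \<in> Ob K; A \<in> Ob K; C' \<in> Ob K; A' \<in> Ob K; c \<in> Hom K C' C; a \<in> Hom K A A'; \<delta> \<in> Ecar E C A\<rbrakk>
   \<Longrightarrow> Emap E C A C' A' c a \<delta> \<in> Ecar E C' A'"
  using bifunctor_axioms[THEN conjunct2, THEN conjunct1] by blast

lemma Emap_Eadd:
  "\<lbrakk>C \<in> Ob K; A \<in> Ob K; C' \<in> Ob K; A' \<in> Ob K; c \<in> Hom K C' C; a \<in> Hom K A A';
    \<delta> \<in> Ecar E C A; \<delta>' \<in> Ecar E C A\<rbrakk>
   \<Longrightarrow> Emap E C A C' A' c a (Eadd E C A \<delta> \<delta>')
     = Eadd E C' A' (Emap E C A C' A' c a \<delta>) (Emap E C A C' A' c a \<delta>')"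
  using bifunctor_axioms[THEN conjunct2, THEN conjunct1] by blast

lemma Emap_Emap:
  "\<lbrakk>C \<in> Ob K; A \<in> Ob K; C' \<in> Ob K; A' \<in> Ob K; C'' \<in> Ob K; A'' \<in> Ob K;
    c \<in> Hom K C' C; a \<in> Hom K A A'; c' \<in> Hom K C'' C'; a' \<in> Hom K A' A''; \<delta> \<in> Ecar E C A\<rbrakk>
   \<Longrightarrow> Emap E C' A' C'' A'' c' a' (Emap E C A C' A' c a \<delta>) = Emap E C A C'' A'' (cmp K c c') (cmp K a' a) \<delta>"
  using bifunctor_axioms[THEN conjunct2, THEN conjunct2, THEN conjunct2, THEN conjunct1] by blast

lemma Emap_hadd_contra:
  "\<lbrakk>C \<in> Ob K; A \<in> Ob K; C' \<in> Ob K; c1 \<in> Hom K C' C; c2 \<in> Hom K C' C; \<delta> \<in> Ecar E C A\<rbrakk>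
   \<Longrightarrow> Emap E C A C' A (hadd K C' C c1 c2) (idm K A) \<delta>
     = Eadd E C' A (Emap E C A C' A c1 (idm K A) \<delta>) (Emap E C A C' A c2 (idm K A) \<delta>)"
  using bifunctor_axioms[THEN conjunct2, THEN conjunct2, THEN conjunct2, THEN conjunct2, THEN conjunct1] by blast

lemma Emap_hadd_co:
  "\<lbrakk>C \<in> Ob K; A \<in> Ob K; A' \<in> Ob K; a1 \<in> Hom K A A'; a2 \<in> Hom K A A'; \<delta> \<in> Ecar E C A\<rbrakk>
   \<Longrightarrow> Emap E C A C A' (idm K C) (hadd K A A' a1 a2) \<delta>
     = Eadd E C A' (Emap E C A C A' (idm K C) a1 \<delta>) (Emap E C A C A' (idm K C) a2 \<delta>)"
  using bifunctor_axioms[THEN conjunct2, THEN conjunct2, THEN conjunct2, THEN conjunct2, THEN conjunct2] by blast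

lemma Emap_Ezero:
  assumes ob: "C \<in> Ob K" "A \<in> Ob K" "C' \<in> Ob K" "A' \<in> Ob K"
    and hom: "c \<in> Hom K C' C" "a \<in> Hom K A A'"
  shows "Emap E C A C' A' c a (Ezero E C A) = Ezero E C' A'"
  using Emap_Eadd[OF ob hom Ezero_closed Ezero_closed] Emap_closed[OF ob hom Ezero_closed] Ezero_closed ob
  by (intro Eadd_idem_eq_zero) auto

lemma Emap_hzero_contra:
  assumes ob: "C \<in> Ob K" "A \<in> Ob K" "C' \<in> Ob K" "A' \<in> Ob K"
    and a: "a \<in> Hom K A A'" and \<delta>: "\<delta> \<in> Ecar E C A"
  shows "Emap E C A C' A' (hzero K C' C) a \<delta> = Ezero E C' A'"
proof -
  have z: "hzero K C' C \<in> Hom K C' C" using ob by simp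
  have "Emap E C A C' A (hzero K C' C) (idm K A) \<delta> = Ezero E C' A"
    using Emap_hadd_contra[OF ob(1,2,3) z z \<delta>] Emap_closed[OF ob(1,2,3,2) z _ \<delta>] ob
    by (intro Eadd_idem_eq_zero) auto
  then show ?thesis
    using Emap_Emap[OF ob(1,2,3,2,3,4) z id_hom[OF ob(2)] id_hom[OF ob(3)] a \<delta>]
      Emap_Ezero[OF ob(3,2,3,4) id_hom[OF ob(3)] a] ob a by simp
qed

lemma Emap_hzero_co:
  assumes ob: "C \<in> Ob K" "A \<in> Ob K" "C' \<in> Ob K" "A' \<in> Ob K"
    and c: "c \<in> Hom K C' C" and \<delta>: "\<delta> \<in> Ecar E C A"
  shows "Emap E C A C' A' c (hzero K A A') \<delta> = Ezero E C' A'"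
proof -
  have z: "hzero K A A' \<in> Hom K A A'" using ob by simp
  have "Emap E C A C A' (idm K C) (hzero K A A') \<delta> = Ezero E C A'"
    using Emap_hadd_co[OF ob(1,2,4) z z \<delta>] Emap_closed[OF ob(1,2,1,4) _ z \<delta>] ob
    by (intro Eadd_idem_eq_zero) auto
  then show ?thesis
    using Emap_Emap[OF ob(1,2,1,4,3,4) id_hom[OF ob(1)] z c id_hom[OF ob(4)] \<delta>]
      Emap_Ezero[OF ob(1,4,3,4) c] ob c by simp
qed

lemmas realization_axioms =
  exact_realization[unfolded exact_realization_def, THEN conjunct1, unfolded realization_def]

lemma realization_classE:
  assumes ob: "C \<in> Ob K" "A \<in> Ob K" and \<delta>: "\<delta> \<in> Ecar E C A"
  obtains f B g where "weak_kc_pair K (A, f, B, g, C)" "(A, f, B, g, C) \<in> s C A \<delta>"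
    "s C A \<delta> = {S'. weak_kc_pair K S' \<and> seq_equiv K (A, f, B, g, C) S'}"
proof -
  obtain f B g where w: "weak_kc_pair K (A, f, B, g, C)"
    and eq: "s C A \<delta> = {S'. weak_kc_pair K S' \<and> seq_equiv K (A, f, B, g, C) S'}"
    using realization_axioms[THEN conjunct1] ob \<delta> by blast
  have "seq_equiv K (A, f, B, g, C) (A, f, B, g, C)"
    unfolding seq_equiv_def chain_map_def using weak_kc_pairD[OF w] is_iso_id[of B]
    by (auto intro!: exI[of _ "idm K B"])
  then show ?thesis using that w eq by blast
qed

lemma realization_memberD:
  assumes ob: "C \<in> Ob K" "A \<in> Ob K" and \<delta>: "\<delta> \<in> Ecar E C A" and S: "(A', f, B, g, C') \<in> s C A \<delta>"
  shows "A' = A" "C' = C" "weak_kc_pair K (A', f, B, g, C')"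
proof -
  obtain f0 B0 g0 where "s C A \<delta> = {S'. weak_kc_pair K S' \<and> seq_equiv K (A, f0, B0, g0, C) S'}"
    using realization_classE[OF ob \<delta>] by metis
  with S show "A' = A" "C' = C" "weak_kc_pair K (A', f, B, g, C')" unfolding seq_equiv_def by auto
qed

lemma realization_lift:
  assumes "C \<in> Ob K" "A \<in> Ob K" "C' \<in> Ob K" "A' \<in> Ob K"
    and "\<delta> \<in> Ecar E C A" "\<rho> \<in> Ecar E C' A'" "a \<in> Hom K A A'" "c \<in> Hom K C C'"
    and "pushE K E C A A' a \<delta> = pullE K E C' C A' c \<rho>"
    and "S \<in> s C A \<delta>" "S' \<in> s C' A' \<rho>"
  shows "\<exists>b. chain_map K S S' a b c"
  using realization_axioms[THEN conjunct2] assms by blast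

lemma realization_class_memI:
  assumes ob: "C \<in> Ob K" "A \<in> Ob K" and \<delta>: "\<delta> \<in> Ecar E C A"
    and T: "(A, fT, BT, gT, C) \<in> s C A \<delta>" and w: "weak_kc_pair K (A, f', B', g', C)"
    and cu: "chain_map K (A, fT, BT, gT, C) (A, f', B', g', C) (idm K A) u (idm K C)"
    and cv: "chain_map K (A, f', B', g', C) (A, fT, BT, gT, C) (idm K A) v (idm K C)"
  shows "(A, f', B', g', C) \<in> s C A \<delta>"
proof -
  obtain f0 B0 g0 where eq: "s C A \<delta> = {S'. weak_kc_pair K S' \<and> seq_equiv K (A, f0, B0, g0, C) S'}"
    using realization_classE[OF ob \<delta>] by metis
  have wT: "weak_kc_pair K (A, fT, BT, gT, C)" using realization_memberD[OF ob \<delta> T] by simp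
  from T[unfolded eq] obtain e where e: "is_iso K B0 BT e"
    and ce: "chain_map K (A, f0, B0, g0, C) (A, fT, BT, gT, C) (idm K A) e (idm K C)"
    unfolding seq_equiv_def by auto
  note hu = chain_mapD[OF cu] and hv = chain_mapD[OF cv]
  have "chain_map K (A, fT, BT, gT, C) (A, fT, BT, gT, C) (idm K A) (cmp K v u) (idm K C)"
    using chain_map_comp[OF cu cv] ob by simp
  then have vu: "is_iso K BT BT (cmp K v u)"
    using weak_kc_pair_endo_is_iso[OF wT] weak_kc_pairD[OF wT] unfolding chain_map_def by auto
  have "chain_map K (A, f', B', g', C) (A, f', B', g', C) (idm K A) (cmp K u v) (idm K C)"
    using chain_map_comp[OF cv cu] ob by simp
  then have uv: "is_iso K B' B' (cmp K u v)"
    using weak_kc_pair_endo_is_iso[OF w] weak_kc_pairD[OF w] unfolding chain_map_def by auto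
  have "is_iso K BT B' u" using is_iso_if_comp_isos[OF _ _ _ _ vu uv] hu hv by simp
  then have "is_iso K B0 B' (cmp K u e)" using is_iso_comp[OF _ _ _ e] chain_mapD[OF ce] hu by simp
  moreover have "chain_map K (A, f0, B0, g0, C) (A, f', B', g', C) (idm K A) (cmp K u e) (idm K C)"
    using chain_map_comp[OF ce cu] ob by simp
  ultimately have "seq_equiv K (A, f0, B0, g0, C) (A, f', B', g', C)" unfolding seq_equiv_def by auto
  then show ?thesis unfolding eq using w by simp
qed

lemma conflationE:
  assumes "(A, f, B, g, C) \<in> conflations K E s"
  obtains \<delta> where "C \<in> Ob K" "A \<in> Ob K" "\<delta> \<in> Ecar E C A" "(A, f, B, g, C) \<in> s C A \<delta>"
    "weak_kc_pair K (A, f, B, g, C)"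
proof -
  from assms obtain C0 A0 \<delta> where ob: "C0 \<in> Ob K" "A0 \<in> Ob K" and \<delta>: "\<delta> \<in> Ecar E C0 A0"
    and S: "(A, f, B, g, C) \<in> s C0 A0 \<delta>"
    unfolding conflations_def by blast
  show ?thesis using that ob \<delta> S realization_memberD[OF ob \<delta> S] by simp
qed

lemma conflationI: "\<lbrakk>C \<in> Ob K; A \<in> Ob K; \<delta> \<in> Ecar E C A; S \<in> s C A \<delta>\<rbrakk> \<Longrightarrow> S \<in> conflations K E s"
  unfolding conflations_def by blast

section \<open>Closure properties of conflations\<close>

lemma conflation_seq_iso:
  assumes S: "(A, f, B, g, C) \<in> conflations K E s"
    and iso: "seq_iso K (A, f, B, g, C) (A', f', B', g', C')"
  shows "(A', f', B', g', C') \<in> conflations K E s"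
proof -
  obtain \<delta> where ob: "C \<in> Ob K" "A \<in> Ob K" and \<delta>: "\<delta> \<in> Ecar E C A"
    and S\<delta>: "(A, f, B, g, C) \<in> s C A \<delta>" and w: "weak_kc_pair K (A, f, B, g, C)"
    using conflationE[OF S] by metis
  obtain a b c a' b' c' where ch: "chain_map K (A, f, B, g, C) (A', f', B', g', C') a b c"
    and ch': "chain_map K (A', f', B', g', C') (A, f, B, g, C) a' b' c'"
    and inv: "cmp K a' a = idm K A" "cmp K a a' = idm K A'" "cmp K b b' = idm K B'"
      "cmp K c' c = idm K C" "cmp K c c' = idm K C'"
    using seq_iso_inverse[OF iso] by blast
  note h = chain_mapD[OF ch] and h' = chain_mapD[OF ch']
  have w': "weak_kc_pair K (A', f', B', g', C')"
    using weak_kc_pair_transfer_retract[OF w ch ch' inv(3)] .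
  define \<delta>' where "\<delta>' = Emap E C A C' A' c' a \<delta>"
  have \<delta>': "\<delta>' \<in> Ecar E C' A'" unfolding \<delta>'_def using Emap_closed h h' \<delta> by simp
  obtain fT BT gT where T: "(A', fT, BT, gT, C') \<in> s C' A' \<delta>'"
    using realization_classE[of C' A' \<delta>'] h \<delta>' by metis
  have "pushE K E C A A' a \<delta> = pullE K E C' C A' c \<delta>'"
    unfolding pushE_def pullE_def \<delta>'_def
    using Emap_Emap[of C A C' A' C A' c' a c "idm K A'" \<delta>] h h' inv \<delta> by simp
  then obtain b1 where b1: "chain_map K (A, f, B, g, C) (A', fT, BT, gT, C') a b1 c"
    using realization_lift[OF ob h(6) h(4) \<delta> \<delta>' _ _ _ S\<delta> T] h by blast
  have "pushE K E C' A' A a' \<delta>' = pullE K E C C' A c' \<delta>"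
    unfolding pushE_def pullE_def \<delta>'_def
    using Emap_Emap[of C A C' A' C' A c' a "idm K C'" a' \<delta>] h h' inv \<delta> by simp
  then obtain b2 where b2: "chain_map K (A', fT, BT, gT, C') (A, f, B, g, C) a' b2 c'"
    using realization_lift[OF h(6) h(4) ob \<delta>' \<delta> _ _ _ T S\<delta>] h' by blast
  have "chain_map K (A', fT, BT, gT, C') (A', f', B', g', C') (idm K A') (cmp K b b2) (idm K C')"
    using chain_map_comp[OF b2 ch] inv by simp
  moreover have "chain_map K (A', f', B', g', C') (A', fT, BT, gT, C') (idm K A') (cmp K b1 b') (idm K C')"
    using chain_map_comp[OF ch' b1] inv by simp
  ultimately have "(A', f', B', g', C') \<in> s C' A' \<delta>'"
    using realization_class_memI[OF _ _ \<delta>' T w'] h by simp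
  then show ?thesis using conflationI h \<delta>' by blast
qed

text \<open>The witness is D = (qc1)^* (ia1)_* \<delta> + (qc2)^* (ia2)_* \<delta>'; the equations say that the
  biproduct injections and projections are morphisms of extensions, so that (R0) compares
  the direct sum of the two conflations with any realization of D.\<close>
lemma direct_sum_extensionE:
  assumes bA: "biproduct K A A' SA ia1 ia2 qa1 qa2" and bC: "biproduct K C C' SC ic1 ic2 qc1 qc2"
    and ob: "A \<in> Ob K" "A' \<in> Ob K" "C \<in> Ob K" "C' \<in> Ob K"
    and \<delta>: "\<delta> \<in> Ecar E C A" and \<delta>': "\<delta>' \<in> Ecar E C' A'"
  obtains D where "D \<in> Ecar E SC SA"
    "pushE K E C A SA ia1 \<delta> = pullE K E SC C SA ic1 D"
    "pushE K E C' A' SA ia2 \<delta>' = pullE K E SC C' SA ic2 D"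
    "pushE K E SC SA A qa1 D = pullE K E C SC A qc1 \<delta>"
    "pushE K E SC SA A' qa2 D = pullE K E C' SC A' qc2 \<delta>'"
proof -
  note BA = biproductD[OF bA] and BC = biproductD[OF bC]
  define e1 where "e1 = Emap E C A SC SA qc1 ia1 \<delta>"
  define e2 where "e2 = Emap E C' A' SC SA qc2 ia2 \<delta>'"
  have e: "e1 \<in> Ecar E SC SA" "e2 \<in> Ecar E SC SA"
    unfolding e1_def e2_def using Emap_closed BA BC ob \<delta> \<delta>' by simp_all
  define D where "D = Eadd E SC SA e1 e2"
  have D: "D \<in> Ecar E SC SA" unfolding D_def using Eadd_closed e BA BC by simp
  have Emap_D: "Emap E SC SA X Y c a D = Eadd E X Y (Emap E C A X Y (cmp K qc1 c) (cmp K a ia1) \<delta>)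
      (Emap E C' A' X Y (cmp K qc2 c) (cmp K a ia2) \<delta>')"
    if "X \<in> Ob K" "Y \<in> Ob K" "c \<in> Hom K X SC" "a \<in> Hom K SA Y" for X Y c a
    unfolding D_def e1_def e2_def
    using Emap_Eadd[OF BC(1) BA(1) that e[unfolded e1_def e2_def]]
      Emap_Emap[of C A SC SA X Y qc1 ia1 c a \<delta>] Emap_Emap[of C' A' SC SA X Y qc2 ia2 c a \<delta>']
      that BA BC ob \<delta> \<delta>' by simp
  show ?thesis
  proof (rule that[OF D])
    show "pushE K E C A SA ia1 \<delta> = pullE K E SC C SA ic1 D"
      unfolding pushE_def pullE_def
      using Emap_D[of C SA ic1 "idm K SA"] Emap_hzero_contra[of C' A' C SA ia2 \<delta>']
        Emap_closed[of C A C SA "idm K C" ia1 \<delta>] BA BC ob \<delta> \<delta>' by simp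
    show "pushE K E C' A' SA ia2 \<delta>' = pullE K E SC C' SA ic2 D"
      unfolding pushE_def pullE_def
      using Emap_D[of C' SA ic2 "idm K SA"] Emap_hzero_contra[of C A C' SA ia1 \<delta>]
        Emap_closed[of C' A' C' SA "idm K C'" ia2 \<delta>'] BA BC ob \<delta> \<delta>' by simp
    show "pushE K E SC SA A qa1 D = pullE K E C SC A qc1 \<delta>"
      unfolding pushE_def pullE_def
      using Emap_D[of SC A "idm K SC" qa1] Emap_hzero_co[of C' A' SC A qc2 \<delta>']
        Emap_closed[of C A SC A qc1 "idm K A" \<delta>] BA BC ob \<delta> \<delta>' by simp
    show "pushE K E SC SA A' qa2 D = pullE K E C' SC A' qc2 \<delta>'"
      unfolding pushE_def pullE_def
      using Emap_D[of SC A' "idm K SC" qa2] Emap_hzero_co[of C A SC A' qc1 \<delta>]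
        Emap_closed[of C' A' SC A' qc2 "idm K A'" \<delta>'] BA BC ob \<delta> \<delta>' by simp
  qed
qed

lemma conflation_direct_sum:
  assumes S1: "(A, f, B, g, C) \<in> conflations K E s" and S2: "(A', f', B', g', C') \<in> conflations K E s"
    and bA: "biproduct K A A' SA ia1 ia2 qa1 qa2" and bB: "biproduct K B B' SB ib1 ib2 qb1 qb2"
    and bC: "biproduct K C C' SC ic1 ic2 qc1 qc2"
  shows "(SA, hadd K SA SB (cmp K ib1 (cmp K f qa1)) (cmp K ib2 (cmp K f' qa2)),
          SB, hadd K SB SC (cmp K ic1 (cmp K g qb1)) (cmp K ic2 (cmp K g' qb2)), SC)
         \<in> conflations K E s"
proof -
  define F where "F = hadd K SA SB (cmp K ib1 (cmp K f qa1)) (cmp K ib2 (cmp K f' qa2))"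
  define G where "G = hadd K SB SC (cmp K ic1 (cmp K g qb1)) (cmp K ic2 (cmp K g' qb2))"
  obtain \<delta> where ob1: "C \<in> Ob K" "A \<in> Ob K" and \<delta>: "\<delta> \<in> Ecar E C A"
    and S1\<delta>: "(A, f, B, g, C) \<in> s C A \<delta>" and w1: "weak_kc_pair K (A, f, B, g, C)"
    using conflationE[OF S1] by metis
  obtain \<delta>' where ob2: "C' \<in> Ob K" "A' \<in> Ob K" and \<delta>': "\<delta>' \<in> Ecar E C' A'"
    and S2\<delta>: "(A', f', B', g', C') \<in> s C' A' \<delta>'" and w2: "weak_kc_pair K (A', f', B', g', C')"
    using conflationE[OF S2] by metis
  note BA = biproductD[OF bA] and BC = biproductD[OF bC]
  obtain D where D: "D \<in> Ecar E SC SA"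
    and eqs: "pushE K E C A SA ia1 \<delta> = pullE K E SC C SA ic1 D"
      "pushE K E C' A' SA ia2 \<delta>' = pullE K E SC C' SA ic2 D"
      "pushE K E SC SA A qa1 D = pullE K E C SC A qc1 \<delta>"
      "pushE K E SC SA A' qa2 D = pullE K E C' SC A' qc2 \<delta>'"
    using direct_sum_extensionE[OF bA bC ob1(2) ob2(2) ob1(1) ob2(1) \<delta> \<delta>'] by blast
  obtain fT BT gT where T: "(SA, fT, BT, gT, SC) \<in> s SC SA D"
    using realization_classE[of SC SA D] BA BC D by metis
  obtain b1 where "chain_map K (A, f, B, g, C) (SA, fT, BT, gT, SC) ia1 b1 ic1"
    using realization_lift[OF ob1 BC(1) BA(1) \<delta> D BA(2) BC(2) eqs(1) S1\<delta> T] by blast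
  moreover obtain b2 where "chain_map K (A', f', B', g', C') (SA, fT, BT, gT, SC) ia2 b2 ic2"
    using realization_lift[OF ob2 BC(1) BA(1) \<delta>' D BA(3) BC(3) eqs(2) S2\<delta> T] by blast
  ultimately obtain u where u: "chain_map K (SA, F, SB, G, SC) (SA, fT, BT, gT, SC) (idm K SA) u (idm K SC)"
    using direct_sum_chain_map_from[OF bA bB bC F_def G_def] by blast
  obtain q1 where "chain_map K (SA, fT, BT, gT, SC) (A, f, B, g, C) qa1 q1 qc1"
    using realization_lift[OF BC(1) BA(1) ob1 D \<delta> BA(4) BC(4) eqs(3) T S1\<delta>] by blast
  moreover obtain q2 where "chain_map K (SA, fT, BT, gT, SC) (A', f', B', g', C') qa2 q2 qc2"
    using realization_lift[OF BC(1) BA(1) ob2 D \<delta>' BA(5) BC(5) eqs(4) T S2\<delta>] by blast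
  ultimately obtain v where v: "chain_map K (SA, fT, BT, gT, SC) (SA, F, SB, G, SC) (idm K SA) v (idm K SC)"
    using direct_sum_chain_map_into[OF bA bB bC F_def G_def] by blast
  have "(SA, F, SB, G, SC) \<in> s SC SA D"
    using realization_class_memI[OF BC(1) BA(1) D T weak_kc_pair_direct_sum[OF w1 w2 bA bB bC F_def G_def] v u] .
  then show ?thesis unfolding F_def G_def using conflationI BA BC D by blast
qed

lemma zero_realizations:
  assumes "zero_obj K Z" "A \<in> Ob K"
  shows "(A, idm K A, A, hzero K A Z, Z) \<in> s Z A (Ezero E Z A)"
    "(Z, hzero K Z A, A, idm K A, A) \<in> s A Z (Ezero E A Z)"
  using exact_realization[unfolded exact_realization_def, THEN conjunct2, THEN conjunct2] assms
  by blast+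

lemma zero_conflation:
  assumes Z: "zero_obj K Z"
  shows "(Z, hzero K Z Z, Z, hzero K Z Z, Z) \<in> conflations K E s"
proof -
  have ob: "Z \<in> Ob K" using Z unfolding zero_obj_def by simp
  show ?thesis
    using zero_realizations(1)[OF Z ob] zero_obj_id_eq_zero[OF Z] conflationI[OF ob ob Ezero_closed[OF ob ob]]
    by simp
qed

lemma closed_dsum_conflations: "closed_dsum K (conflations K E s)"
  unfolding closed_dsum_def
proof (intro conjI allI impI)
  fix A f B g C A' f' B' g' C' SA ia1 ia2 qa1 qa2 SB ib1 ib2 qb1 qb2 SC ic1 ic2 qc1 qc2
  assume S1: "(A, f, B, g, C) \<in> conflations K E s" and S2: "(A', f', B', g', C') \<in> conflations K E s"
    and "biproduct K A A' SA ia1 ia2 qa1 qa2 \<and> biproduct K B B' SB ib1 ib2 qb1 qb2 \<and>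
      biproduct K C C' SC ic1 ic2 qc1 qc2"
  then show "(SA, hadd K SA SB (cmp K ib1 (cmp K f qa1)) (cmp K ib2 (cmp K f' qa2)),
      SB, hadd K SB SC (cmp K ic1 (cmp K g qb1)) (cmp K ic2 (cmp K g' qb2)), SC) \<in> conflations K E s"
    using conflation_direct_sum[OF S1 S2] by blast
qed (rule zero_conflation)

lemma id_admissible:
  assumes A: "A \<in> Ob K"
  shows "adm_monic K (conflations K E s) A (idm K A) A" "adm_epic K (conflations K E s) A (idm K A) A"
proof -
  obtain Z where Z: "zero_obj K Z" using additive_category unfolding additive_category_def by blast
  then have ob: "Z \<in> Ob K" unfolding zero_obj_def by simp
  show "adm_monic K (conflations K E s) A (idm K A) A"
    unfolding adm_monic_def
    using conflationI[OF ob A Ezero_closed[OF ob A] zero_realizations(1)[OF Z A]] by blast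
  show "adm_epic K (conflations K E s) A (idm K A) A"
    unfolding adm_epic_def
    using conflationI[OF A ob Ezero_closed[OF A ob] zero_realizations(2)[OF Z A]] by blast
qed

end

locale weakly_extriangulated_mono_epi = weakly_extriangulated_cat +
  assumes inflation_mono_deflation_epi: "\<forall>A f B g C. (A, f, B, g, C) \<in> conflations K E s \<longrightarrow>
    is_mono K A B f \<and> is_epi K B C g"
begin

lemma conflation_kc_pair:
  assumes S: "S \<in> conflations K E s"
  shows "kc_pair K S"
proof -
  obtain A f B g C where S_eq: "S = (A, f, B, g, C)" by (cases S rule: prod_cases5)
  with S have S': "(A, f, B, g, C) \<in> conflations K E s" by simp
  then obtain \<delta> where "weak_kc_pair K (A, f, B, g, C)" by (rule conflationE)
  then show ?thesis
    unfolding S_eq using kc_pair_if_mono_epi inflation_mono_deflation_epi S' by blast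
qed

lemma conflation_pushout:
  assumes S: "(A, i, B, d, C) \<in> conflations K E s" and A': "A' \<in> Ob K" and a: "a \<in> Hom K A A'"
  shows "\<exists>P f' a'. is_pushout K A B A' P i a f' a' \<and> adm_monic K (conflations K E s) A' f' P"
proof -
  obtain \<delta> where ob: "C \<in> Ob K" "A \<in> Ob K" and \<delta>: "\<delta> \<in> Ecar E C A"
    and S\<delta>: "(A, i, B, d, C) \<in> s C A \<delta>" and w: "weak_kc_pair K (A, i, B, d, C)"
    using conflationE[OF S] by metis
  note W = weak_kc_pairD[OF w]
  define \<rho> where "\<rho> = pushE K E C A A' a \<delta>"
  have \<rho>: "\<rho> \<in> Ecar E C A'" unfolding \<rho>_def pushE_def using Emap_closed ob A' a \<delta> by simp
  obtain f P g where T: "(A', f, P, g, C) \<in> s C A' \<rho>"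
    using realization_classE[OF ob(1) A' \<rho>] by metis
  note WT = weak_kc_pairD[OF realization_memberD(3)[OF ob(1) A' \<rho> T]]
  obtain b where ch: "chain_map K (A, i, B, d, C) (A', f, P, g, C) a b (idm K C)"
    and cocone: "\<And>SS j1 j2 p1 p2. biproduct K A' B SS j1 j2 p1 p2 \<Longrightarrow>
        mcocone K A A' P a i f b SS j1 j2 p1 p2 \<in> s P A (pullE K E C P A g \<delta>)"
    using EA2op[unfolded EA2op_def, rule_format, OF ob A' \<delta> a conjI[OF T[unfolded \<rho>_def] S\<delta>]]
    by blast
  obtain SS j1 j2 p1 p2 where bp: "biproduct K A' B SS j1 j2 p1 p2"
    using additive_category A' W(2) unfolding additive_category_def by blast
  have pull: "pullE K E C P A g \<delta> \<in> Ecar E P A"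
    unfolding pullE_def using Emap_closed[OF ob(1,2) WT(2) ob(2) WT(5) id_hom[OF ob(2)] \<delta>] .
  have "kc_pair K (mcocone K A A' P a i f b SS j1 j2 p1 p2)"
    using conflation_kc_pair[OF conflationI[OF WT(2) ob(2) pull cocone[OF bp]]] .
  then have "is_cokernel K A SS P (hadd K A SS (cmp K j1 a) (cmp K j2 i))
      (hadd K SS P (cmp K (hneg K A' P f) p1) (cmp K b p2))"
    unfolding mcocone_def kc_pair_def by simp
  then have "is_pushout K A B A' P i a f b"
    by (rule is_pushout_if_cokernel[OF bp ob(2) A' W(2) WT(2) W(4) a WT(4) chain_mapD(12,14)[OF ch]])
  moreover have "adm_monic K (conflations K E s) A' f P"
    unfolding adm_monic_def using conflationI[OF ob(1) A' \<rho> T] by blast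
  ultimately show ?thesis by blast
qed

lemma conflation_pullback:
  assumes S: "(A, i, B, d, C) \<in> conflations K E s" and C': "C' \<in> Ob K" and c: "c \<in> Hom K C' C"
  shows "\<exists>P d' c'. is_pullback K B C C' P d c d' c' \<and> adm_epic K (conflations K E s) P d' C'"
proof -
  obtain \<delta> where ob: "C \<in> Ob K" "A \<in> Ob K" and \<delta>: "\<delta> \<in> Ecar E C A"
    and S\<delta>: "(A, i, B, d, C) \<in> s C A \<delta>" and w: "weak_kc_pair K (A, i, B, d, C)"
    using conflationE[OF S] by metis
  note W = weak_kc_pairD[OF w]
  define \<rho> where "\<rho> = pullE K E C C' A c \<delta>"
  have \<rho>: "\<rho> \<in> Ecar E C' A" unfolding \<rho>_def pullE_def using Emap_closed ob C' c \<delta> by simp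
  obtain f P g where T: "(A, f, P, g, C') \<in> s C' A \<rho>"
    using realization_classE[OF C' ob(2) \<rho>] by metis
  note WT = weak_kc_pairD[OF realization_memberD(3)[OF C' ob(2) \<rho> T]]
  obtain b where ch: "chain_map K (A, f, P, g, C') (A, i, B, d, C) (idm K A) b c"
    and cone: "\<And>SS j1 j2 p1 p2. biproduct K C' B SS j1 j2 p1 p2 \<Longrightarrow>
        mcone K P C' C g b c d SS j1 j2 p1 p2 \<in> s C P (pushE K E C A P f \<delta>)"
    using EA2[unfolded EA2_def, rule_format, OF ob C' \<delta> c conjI[OF T[unfolded \<rho>_def] S\<delta>]]
    by blast
  obtain SS j1 j2 p1 p2 where bp: "biproduct K C' B SS j1 j2 p1 p2"
    using additive_category C' W(2) unfolding additive_category_def by blast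
  have push: "pushE K E C A P f \<delta> \<in> Ecar E C P"
    unfolding pushE_def using Emap_closed[OF ob(1,2,1) WT(2) id_hom[OF ob(1)] WT(4) \<delta>] .
  have "kc_pair K (mcone K P C' C g b c d SS j1 j2 p1 p2)"
    using conflation_kc_pair[OF conflationI[OF ob(1) WT(2) push cone[OF bp]]] .
  then have "is_kernel K P SS C (hadd K P SS (cmp K j1 (hneg K P C' g)) (cmp K j2 b))
      (hadd K SS C (cmp K c p1) (cmp K d p2))"
    unfolding mcone_def kc_pair_def by simp
  then have "is_pullback K B C C' P d c g b"
    by (rule is_pullback_if_kernel[OF bp ob(1) C' W(2) WT(2) W(5) c WT(5) chain_mapD(12)[OF ch]
          chain_mapD(15)[OF ch, symmetric]])
  moreover have "adm_epic K (conflations K E s) P g C'"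
    unfolding adm_epic_def using conflationI[OF C' ob(2) \<rho> T] by blast
  ultimately show ?thesis by blast
qed

end

theorem mainTheorem11:
  fixes K :: "('o,'m) precat" and E :: "('o,'m,'e) bifun" and s :: "('o,'m,'e) realiz"
  assumes "weakly_extriangulated K E s"
    and "\<forall>A f B g C. (A, f, B, g, C) \<in> conflations K E s \<longrightarrow>
            is_mono K A B f \<and> is_epi K B C g"
  shows "weakly_exact K (conflations K E s)"
proof -
  interpret weakly_extriangulated_mono_epi K E s
    using assms by unfold_locales auto
  show ?thesis
    unfolding weakly_exact_def
  proof (intro conjI ballI allI impI)
    show "kc_pair K S" if "S \<in> conflations K E s" for S
      using that by (rule conflation_kc_pair)
    show "S' \<in> conflations K E s" if "S \<in> conflations K E s \<and> seq_iso K S S'" for S S'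
    proof -
      obtain A f B g C A' f' B' g' C' where "S = (A, f, B, g, C)" "S' = (A', f', B', g', C')"
        by (cases S rule: prod_cases5, cases S' rule: prod_cases5) blast
      then show ?thesis using that conflation_seq_iso[of A f B g C A' f' B' g' C'] by simp
    qed
    show "closed_dsum K (conflations K E s)" by (rule closed_dsum_conflations)
    show "adm_monic K (conflations K E s) A (idm K A) A" "adm_epic K (conflations K E s) A (idm K A) A"
      if "A \<in> Ob K" for A
      using id_admissible[OF that] by auto
    show "\<exists>P f' a'. is_pushout K A B A' P i a f' a' \<and> adm_monic K (conflations K E s) A' f' P"
      if "(A, i, B, d, C) \<in> conflations K E s \<and> A' \<in> Ob K \<and> a \<in> Hom K A A'" for A i B d C A' a
      using conflation_pushout that by blast
    show "\<exists>P d' c'. is_pullback K B C C' P d c d' c' \<and> adm_epic K (conflations K E s) P d' C'"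
      if "(A, i, B, d, C) \<in> conflations K E s \<and> C' \<in> Ob K \<and> c \<in> Hom K C' C" for A i B d C C' c
      using conflation_pullback that by blast
  qed
qed

end
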